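(* Let $\alpha_1$ and $\alpha_2$ be cocycles defined on the dynamical systems $(X_1,\mathcal B_1,\mu_1,\Gamma_1)$ and $(X_2,\mathcal B_2,\mu_2,\Gamma_2)$ respectively, with values in a group $G$ equipped with a subadditive function $\theta$. Assume $\alpha_1$ and $\alpha_2$ are weakly equivalent through an isomorphism $h:X_1\to X_2$. If $\gamma_1\in\Gamma_1$ and $\gamma_2=h\gamma_1h^{-1}$ are such that the maps $x_1\mapsto\theta(\alpha_1(x_1,\gamma_1))$ and $x_2\mapsto\theta(\alpha_2(x_2,\gamma_2))$ are integrable on $X_1$ and $X_2$ respectively, then $\Theta_{\mu_1}(\gamma_1,\alpha_1)=\Theta_{\mu_2}(\gamma_2,\alpha_2)$.
   Context: For a probability space $(X,\mathcal B,\mu)$, $\mathrm{Aut}(X,\mu)$ is the group of invertible measure-preserving transformations; $\Gamma_i$ is a subgroup of $\mathrm{Aut}(X_i,\mu_i)$. A measurable map $\alpha:X\times\Gamma\to G$ is a cocycle if for all $\gamma_1,\gamma_2\in\Gamma$ and $\mu$-a.e. $x$, $\alpha(x,\gamma_1\gamma_2)=\alpha(x,\gamma_1)\alpha(\gamma_1x,\gamma_2)$. A subadditive function on $G$ is a continuous $\theta:G\to\mathbb R^+$ with $\theta(g_1g_2)\le\theta(g_1)+\theta(g_2)$. Two cocycles $\alpha,\beta$ on the same system are cohomologous if there is a measurable $\phi:X\to G$ with $\beta(x,\gamma)=\phi(x)\alpha(x,\gamma)(\phi(\gamma x))^{-1}$ for all $\gamma\in\Gamma$ and $\mu$-a.e.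 $x$. An isomorphism $h:X_1\to X_2$ is an invertible transformation carrying $\mu_1$ onto $\mu_2$; for a cocycle $\alpha_1$ on $(X_1,\mathcal B_1,\mu_1,\Gamma_1)$ and $\Gamma_2=h\Gamma_1h^{-1}$, $h\circ\alpha_1$ is the cocycle on $(X_2,\mathcal B_2,\mu_2,\Gamma_2)$ given by $h\circ\alpha_1(x_2,\gamma_2)=\alpha_1(h^{-1}(x_2),h^{-1}\gamma_2h)$. The cocycles $\alpha_1,\alpha_2$ are weakly equivalent (through $h$) if $\Gamma_2=h\Gamma_1h^{-1}$ and $\alpha_2$ and $h\circ\alpha_1$ are cohomologous. If $x\mapsto\theta(\alpha(x,\gamma))$ is integrable, then for $\mu$-a.e. $x$ the limit $\Theta(x,\gamma,\alpha)=\lim_{n\to\infty}\frac1n\theta(\alpha(x,\gamma^n))$ exists and is integrable, and $\Theta_\mu(\gamma,\alpha):=\int\Theta(x,\gamma,\alpha)\,d\mu$. *)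

theory Defs
  imports "HOL-Probability.Probability"
begin

text \<open>Transformations of a measure space are total HOL functions; as a normalisation
  convention they act as the identity outside the space, so that two transformations
  agreeing on the space are equal.\<close>

definition measure_preserving :: "'a measure \<Rightarrow> 'b measure \<Rightarrow> ('a \<Rightarrow> 'b) set" where
  "measure_preserving M1 M2 = {T. T \<in> measurable M1 M2 \<and> distr M1 M2 T = M2}"

definition aut_inv :: "'a measure \<Rightarrow> ('a \<Rightarrow> 'a) \<Rightarrow> ('a \<Rightarrow> 'a)" where
  "aut_inv M T = (\<lambda>x. if x \<in> space M then the_inv_into (space M) T x else x)"

definition Aut :: "'a measure \<Rightarrow> ('a \<Rightarrow> 'a) set" where
  "Aut M = {T. bij_betw T (space M) (space M) \<and> (\<forall>x. x \<notin> space M \<longrightarrow> T x = x)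
              \<and> T \<in> measure_preserving M M \<and> aut_inv M T \<in> measure_preserving M M}"

text \<open>Group product: gamma1 gamma2 is the
  transformation "first gamma1, then gamma2", i.e. gamma2 o gamma1 (this is the
  convention under which the cocycle identity below is the standard one).\<close>
definition aut_subgroup :: "'a measure \<Rightarrow> ('a \<Rightarrow> 'a) set \<Rightarrow> bool" where
  "aut_subgroup M \<Gamma> \<longleftrightarrow> \<Gamma> \<subseteq> Aut M \<and> id \<in> \<Gamma>
     \<and> (\<forall>g1\<in>\<Gamma>. \<forall>g2\<in>\<Gamma>. g2 \<circ> g1 \<in> \<Gamma>) \<and> (\<forall>g\<in>\<Gamma>. aut_inv M g \<in> \<Gamma>)"

definition subadditive_fun :: "('g::{group_add,topological_space} \<Rightarrow> real) \<Rightarrow> bool" where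
  "subadditive_fun \<theta> \<longleftrightarrow> continuous_on UNIV \<theta> \<and> (\<forall>g. \<theta> g \<ge> 0)
     \<and> (\<forall>g1 g2. \<theta> (g1 + g2) \<le> \<theta> g1 + \<theta> g2)"

text \<open>The group G is written additively (class group_add, not necessarily commutative).\<close>
definition cocycle ::
  "'a measure \<Rightarrow> ('a \<Rightarrow> 'a) set \<Rightarrow> ('a \<Rightarrow> ('a \<Rightarrow> 'a) \<Rightarrow> 'g::{group_add,topological_space}) \<Rightarrow> bool" where
  "cocycle M \<Gamma> \<alpha> \<longleftrightarrow> (\<forall>\<gamma>\<in>\<Gamma>. (\<lambda>x. \<alpha> x \<gamma>) \<in> borel_measurable M)
     \<and> (\<forall>g1\<in>\<Gamma>. \<forall>g2\<in>\<Gamma>. AE x in M. \<alpha> x (g2 \<circ> g1) = \<alpha> x g1 + \<alpha> (g1 x) g2)"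

definition cohomologous ::
  "'a measure \<Rightarrow> ('a \<Rightarrow> 'a) set \<Rightarrow> ('a \<Rightarrow> ('a \<Rightarrow> 'a) \<Rightarrow> 'g::{group_add,topological_space})
     \<Rightarrow> ('a \<Rightarrow> ('a \<Rightarrow> 'a) \<Rightarrow> 'g) \<Rightarrow> bool" where
  "cohomologous M \<Gamma> \<alpha> \<beta> \<longleftrightarrow> (\<exists>\<phi>. \<phi> \<in> borel_measurable M \<and>
     (\<forall>\<gamma>\<in>\<Gamma>. AE x in M. \<beta> x \<gamma> = \<phi> x + \<alpha> x \<gamma> - \<phi> (\<gamma> x)))"

definition isomorphism :: "'a measure \<Rightarrow> 'b measure \<Rightarrow> ('a \<Rightarrow> 'b) \<Rightarrow> bool" where
  "isomorphism M1 M2 h \<longleftrightarrow> bij_betw h (space M1) (space M2) \<and> h \<in> measure_preserving M1 M2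
     \<and> the_inv_into (space M1) h \<in> measure_preserving M2 M1"

definition conj_by :: "'a measure \<Rightarrow> 'b measure \<Rightarrow> ('a \<Rightarrow> 'b) \<Rightarrow> ('a \<Rightarrow> 'a) \<Rightarrow> ('b \<Rightarrow> 'b)" where
  "conj_by M1 M2 h \<gamma> = (\<lambda>y. if y \<in> space M2 then h (\<gamma> (the_inv_into (space M1) h y)) else y)"

definition transport_cocycle ::
  "'a measure \<Rightarrow> 'b measure \<Rightarrow> ('a \<Rightarrow> 'b) \<Rightarrow> ('a \<Rightarrow> ('a \<Rightarrow> 'a) \<Rightarrow> 'g) \<Rightarrow> ('b \<Rightarrow> ('b \<Rightarrow> 'b) \<Rightarrow> 'g)" where
  "transport_cocycle M1 M2 h \<alpha> = (\<lambda>y \<gamma>. \<alpha> (the_inv_into (space M1) h y)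
      (\<lambda>x. if x \<in> space M1 then the_inv_into (space M1) h (\<gamma> (h x)) else x))"

definition weakly_equivalent_through ::
  "'a measure \<Rightarrow> ('a \<Rightarrow> 'a) set \<Rightarrow> ('a \<Rightarrow> ('a \<Rightarrow> 'a) \<Rightarrow> 'g::{group_add,topological_space})
   \<Rightarrow> 'b measure \<Rightarrow> ('b \<Rightarrow> 'b) set \<Rightarrow> ('b \<Rightarrow> ('b \<Rightarrow> 'b) \<Rightarrow> 'g) \<Rightarrow> ('a \<Rightarrow> 'b) \<Rightarrow> bool" where
  "weakly_equivalent_through M1 \<Gamma>1 \<alpha>1 M2 \<Gamma>2 \<alpha>2 h \<longleftrightarrow> isomorphism M1 M2 h
     \<and> \<Gamma>2 = conj_by M1 M2 h ` \<Gamma>1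
     \<and> cohomologous M2 \<Gamma>2 (transport_cocycle M1 M2 h \<alpha>1) \<alpha>2"

definition Theta_pt :: "('g \<Rightarrow> real) \<Rightarrow> ('a \<Rightarrow> ('a \<Rightarrow> 'a) \<Rightarrow> 'g) \<Rightarrow> ('a \<Rightarrow> 'a) \<Rightarrow> 'a \<Rightarrow> real" where
  "Theta_pt \<theta> \<alpha> \<gamma> x = lim (\<lambda>n. \<theta> (\<alpha> x (\<gamma> ^^ n)) / real n)"

definition Theta_mu :: "'a measure \<Rightarrow> ('g \<Rightarrow> real) \<Rightarrow> ('a \<Rightarrow> ('a \<Rightarrow> 'a) \<Rightarrow> 'g) \<Rightarrow> ('a \<Rightarrow> 'a) \<Rightarrow> real" where
  "Theta_mu M \<theta> \<alpha> \<gamma> = (\<integral>x. Theta_pt \<theta> \<alpha> \<gamma> x \<partial>M)"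

end

(*
  Both limits exist by Kingman's subadditive ergodic theorem, proved here in the style of
  Katznelson and Weiss.  Splitting the orbit into blocks of length m and applying the Birkhoff
  upper bound to T^m bounds the integral of limsup g n / n by that of g m / m; covering the orbit
  by short blocks on which g is close to the T-invariant liminf then bounds it by the integral of
  the liminf, so limsup and liminf agree almost everywhere.

  Transporting alpha1 by h, the coboundary relation reads
  alpha2 (y, T^n) = phi y + alpha1 (h^-1 y, gamma1^n) - phi (T^n y), so by subadditivity the two
  sequences theta (alpha (., gamma^n)) differ by a term at y, which vanishes after division by n,
  and a term at T^n y.  A measurable function along an orbit is frequently small compared to n;
  this handles the term theta (phi (T^n y)).  The term theta (- phi (T^n y)) need not be
  measurable, and is handled by running the orbit backwards with T^-1 from a recurrent point.
  Hence the two limits agree almost everywhere, and so do their integrals because h preserves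
  the measures.
*)
theory Submission
  imports Defs
begin

(* w p k is the cost of the block [k, k + p).  Greedily, a good position starts a block of
   length at most L dominated by the a's; any other position, and any position within L of the
   end, is covered by a single step at the extra cost b. *)
lemma subadditive_le_sum_by_covering:
  fixes w :: "nat \<Rightarrow> nat \<Rightarrow> real" and a b :: "nat \<Rightarrow> real" and good :: "nat \<Rightarrow> bool"
    and L n :: nat
  assumes sub: "\<And>p q k. 1 \<le> p \<Longrightarrow> 1 \<le> q \<Longrightarrow> w (p+q) k \<le> w p k + w q (k+p)"
    and one: "\<And>k. w 1 k \<le> a k + b k"
    and b_nonneg: "\<And>k. 0 \<le> b k"
    and good_block: "\<And>k. good k \<Longrightarrow> \<exists>N. 1 \<le> N \<and> N \<le> L \<and> w N k \<le> (\<Sum>i<N. a (k+i))"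
  shows "k < n \<Longrightarrow> w (n-k) k \<le> (\<Sum>j\<in>{k..<n}. a j + (if \<not> good j \<or> n < j + L then b j else 0))"
proof (induction "n - k" arbitrary: k rule: less_induct)
  case less
  define c where "c j = (if \<not> good j \<or> n < j + L then b j else 0)" for j
  have c_nonneg: "0 \<le> c j" for j using b_nonneg by (simp add: c_def)
  have mono: "(\<Sum>j\<in>{p..<q}. a j) \<le> (\<Sum>j\<in>{p..<q}. a j + c j)" for p q
    by (rule sum_mono) (use c_nonneg in auto)
  have concat: "(\<Sum>j\<in>{k..<n}. a j + c j) = (\<Sum>j\<in>{k..<m}. a j + c j) + (\<Sum>j\<in>{m..<n}. a j + c j)"
    if "k \<le> m" "m \<le> n" for m
    using that by (simp add: sum.atLeastLessThan_concat)
  have shift: "(\<Sum>i<N. a (k+i)) = (\<Sum>j\<in>{k..<k+N}. a j)" for N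
  proof -
    have "(\<Sum>j\<in>{k..<k+N}. a j) = (\<Sum>j\<in>{0+k..<N+k}. a j)" by (simp add: add.commute)
    also have "\<dots> = (\<Sum>i\<in>{0..<N}. a (i+k))" by (rule sum.shift_bounds_nat_ivl)
    finally show ?thesis by (simp add: atLeast0LessThan add.commute)
  qed
  show ?case
  proof (cases "good k \<and> (\<exists>N. 1 \<le> N \<and> N \<le> L \<and> w N k \<le> (\<Sum>i<N. a (k+i)) \<and> N \<le> n - k)")
    case True
    then obtain N where N: "1 \<le> N" "N \<le> L" "w N k \<le> (\<Sum>i<N. a (k+i))" "N \<le> n - k" by blast
    show ?thesis
    proof (cases "N = n - k")
      case True
      have kn: "k + N = n" using True less.prems by simp
      have "w (n-k) k \<le> (\<Sum>j\<in>{k..<k+N}. a j)" using N(3) True shift[of N] by simp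
      also have "\<dots> = (\<Sum>j\<in>{k..<n}. a j)" using kn by simp
      also have "\<dots> \<le> (\<Sum>j\<in>{k..<n}. a j + c j)" by (rule mono)
      finally show ?thesis by (simp add: c_def)
    next
      case False
      then have lt: "N < n - k" using N by simp
      have "w (n-k) k = w (N + (n - (k+N))) k" using lt by (simp add: algebra_simps)
      also have "\<dots> \<le> w N k + w (n - (k+N)) (k+N)" by (rule sub) (use N lt in auto)
      also have "w (n - (k+N)) (k+N) \<le> (\<Sum>j\<in>{k+N..<n}. a j + c j)"
        using less.hyps[of "k+N"] lt N unfolding c_def by auto
      also have "w N k \<le> (\<Sum>j\<in>{k..<k+N}. a j + c j)" using N(3) shift[of N] mono[of k "k+N"] by linarith
      finally show ?thesis using concat[of "k+N"] lt unfolding c_def by simp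
    qed
  next
    case False
    have ck: "c k = b k"
    proof (cases "good k")
      case True
      then obtain N where N: "1 \<le> N" "N \<le> L" "w N k \<le> (\<Sum>i<N. a (k+i))" using good_block by blast
      with False True have "n - k < N" by auto
      then have "n < k + L" using N(2) less.prems by linarith
      then show ?thesis by (simp add: c_def)
    qed (simp add: c_def)
    show ?thesis
    proof (cases "n - k = 1")
      case True
      then have "n = Suc k" using less.prems by simp
      then have e: "{k..<n} = {k}" by auto
      have "w (n-k) k \<le> a k + c k" using one[of k] ck True by simp
      also have "\<dots> = (\<Sum>j\<in>{k..<n}. a j + c j)" by (subst e) simp
      finally show ?thesis unfolding c_def .
    next
      case False
      then have lt: "1 < n - k" using less.prems by linarith
      have "n - k = 1 + (n - Suc k)" using lt by linarith
      then have "w (n-k) k = w (1 + (n - Suc k)) k" by simp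
      also have "\<dots> \<le> w 1 k + w (n - Suc k) (k+1)" by (rule sub) (use lt in auto)
      also have "w (n - Suc k) (k+1) \<le> (\<Sum>j\<in>{Suc k..<n}. a j + c j)"
        using less.hyps[of "Suc k"] lt unfolding c_def by auto
      also have "w 1 k \<le> a k + c k" using one ck by simp
      finally show ?thesis using less.prems unfolding c_def by (simp add: sum.atLeast_Suc_lessThan)
    qed
  qed
qed

lemma sum_lessThan_add:
  fixes f :: "nat \<Rightarrow> 'b::comm_monoid_add"
  shows "(\<Sum>i<p + q. f i) = (\<Sum>i<p. f i) + (\<Sum>i<q. f (p + i))"
  by (induction q) (simp_all add: add.assoc)

lemma funpow_add_apply: "(f ^^ m) ((f ^^ n) x) = (f ^^ (n + m)) x"
  by (simp add: funpow_add add.commute)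

lemma average_shift_le:
  fixes s t :: "nat \<Rightarrow> real"
  assumes step: "\<And>n. s (Suc n) \<le> c + t n" and t_nonneg: "\<And>n. 0 \<le> t n"
  shows limsup_average_shift_le: "limsup (\<lambda>n. ennreal (s n / n)) \<le> limsup (\<lambda>n. ennreal (t n / n))"
    and liminf_average_shift_le: "liminf (\<lambda>n. ennreal (s n / n)) \<le> liminf (\<lambda>n. ennreal (t n / n))"
proof -
  have shift: "\<forall>\<^sub>F n in sequentially. ennreal (s (n + 1) / real (n + 1)) \<le> ennreal e + ennreal (t n / n)"
    if e: "0 < e" for e
  proof -
    have "(\<lambda>n. c / real (Suc n)) \<longlonglongrightarrow> 0"
      using LIMSEQ_Suc[OF lim_const_over_n[of c]] by simp
    then have "\<forall>\<^sub>F n in sequentially. c / real (Suc n) < e"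
      using e by (rule order_tendstoD)
    then show ?thesis
      using eventually_ge_at_top[of "1::nat"]
    proof eventually_elim
      case (elim n)
      have "s (Suc n) / real (Suc n) \<le> c / real (Suc n) + t n / real (Suc n)"
        using step[of n] by (simp add: add_divide_distrib[symmetric] divide_right_mono)
      also have "t n / real (Suc n) \<le> t n / n"
        using elim(2) t_nonneg by (intro divide_left_mono) auto
      finally have "s (Suc n) / real (Suc n) \<le> e + t n / n"
        using elim(1) by linarith
      then have "ennreal (s (Suc n) / real (Suc n)) \<le> ennreal (e + t n / n)"
        by (rule ennreal_leI)
      also have "\<dots> = ennreal e + ennreal (t n / n)"
        using e t_nonneg by (intro ennreal_plus) auto
      finally show ?case
        by simp
    qed
  qed
  show "limsup (\<lambda>n. ennreal (s n / n)) \<le> limsup (\<lambda>n. ennreal (t n / n))"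
  proof (rule ennreal_le_epsilon)
    fix e :: real assume "0 < e"
    have "limsup (\<lambda>n. ennreal (s n / n)) = limsup (\<lambda>n. ennreal (s (n + 1) / real (n + 1)))"
      using limsup_shift[of "\<lambda>n. ennreal (s n / n)"] by simp
    also have "\<dots> \<le> limsup (\<lambda>n. ennreal e + ennreal (t n / n))"
      using shift[OF \<open>0 < e\<close>] by (rule Limsup_mono)
    also have "\<dots> = ennreal e + limsup (\<lambda>n. ennreal (t n / n))"
      by (simp add: Limsup_const_add)
    finally show "limsup (\<lambda>n. ennreal (s n / n)) \<le> limsup (\<lambda>n. ennreal (t n / n)) + ennreal e"
      by (simp add: add.commute)
  qed
  show "liminf (\<lambda>n. ennreal (s n / n)) \<le> liminf (\<lambda>n. ennreal (t n / n))"
  proof (rule ennreal_le_epsilon)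
    fix e :: real assume "0 < e"
    have "liminf (\<lambda>n. ennreal (s n / n)) = liminf (\<lambda>n. ennreal (s (n + 1) / real (n + 1)))"
      using liminf_shift[of "\<lambda>n. ennreal (s n / n)"] by simp
    also have "\<dots> \<le> liminf (\<lambda>n. ennreal e + ennreal (t n / n))"
      using shift[OF \<open>0 < e\<close>] by (rule Liminf_mono)
    also have "\<dots> = ennreal e + liminf (\<lambda>n. ennreal (t n / n))"
      by (simp add: Liminf_const_add)
    finally show "liminf (\<lambda>n. ennreal (s n / n)) \<le> liminf (\<lambda>n. ennreal (t n / n)) + ennreal e"
      by (simp add: add.commute)
  qed
qed

lemma frequently_less_Limsup:
  fixes f :: "_ \<Rightarrow> 'b::complete_linorder"
  assumes "a < Limsup F f"
  shows "\<exists>\<^sub>F x in F. a < f x"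
  using assms Limsup_bounded[of f a F] by (auto simp: frequently_def not_less)

lemma sum_if_nat_less_le:
  fixes t :: real
  assumes "0 \<le> t"
  shows "(\<Sum>q\<le>Q. if real q < t then 1 else 0 :: real) \<le> t + 1"
proof -
  have "{q \<in> {..Q}. real q < t} \<subseteq> {..<nat \<lceil>t\<rceil>}"
  proof
    fix q assume "q \<in> {q \<in> {..Q}. real q < t}"
    then have "int q < \<lceil>t\<rceil>"
      by (simp add: less_ceiling_iff)
    then show "q \<in> {..<nat \<lceil>t\<rceil>}"
      by simp
  qed
  then have "card {q \<in> {..Q}. real q < t} \<le> nat \<lceil>t\<rceil>"
    using card_mono[of "{..<nat \<lceil>t\<rceil>}"] by fastforce
  moreover have "(\<Sum>q\<le>Q. if real q < t then 1 else 0 :: real) = card {q \<in> {..Q}. real q < t}"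
    by (simp add: sum.If_cases Int_def)
  ultimately show ?thesis
    using assms by linarith
qed

lemma (in prob_space) summable_measure_gt_multiple:
  fixes H :: "'a \<Rightarrow> real"
  assumes int_H: "integrable M H" and H_nonneg: "\<And>x. 0 \<le> H x" and e: "0 < e"
  shows "summable (\<lambda>q. measure M {x \<in> space M. e * q < H x})"
proof (rule bounded_imp_summable)
  have [measurable]: "H \<in> borel_measurable M"
    using int_H by simp
  fix Q :: nat
  have count: "(\<Sum>q\<le>Q. indicator {x \<in> space M. e * q < H x} x) \<le> H x / e + 1" if "x \<in> space M" for x
  proof -
    have "(\<Sum>q\<le>Q. indicator {x \<in> space M. e * q < H x} x) = (\<Sum>q\<le>Q. if real q < H x / e then 1 else 0 :: real)"
      using that e by (intro sum.cong) (auto simp: indicator_def pos_less_divide_eq mult.commute)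
    also have "\<dots> \<le> H x / e + 1"
      using H_nonneg[of x] e by (intro sum_if_nat_less_le) simp
    finally show ?thesis .
  qed
  have sets: "{x \<in> space M. e * q < H x} \<in> sets M" for q :: nat
    by measurable
  have "(\<Sum>q\<le>Q. measure M {x \<in> space M. e * q < H x})
      = (\<Sum>q\<le>Q. \<integral>x. indicator {x \<in> space M. e * q < H x} x \<partial>M)"
    using sets by simp
  also have "\<dots> = (\<integral>x. (\<Sum>q\<le>Q. indicator {x \<in> space M. e * q < H x} x) \<partial>M)"
    using sets by (intro Bochner_Integration.integral_sum[symmetric]) (auto simp: less_top[symmetric])
  also have "\<dots> \<le> (\<integral>x. H x / e + 1 \<partial>M)"
  proof (rule integral_mono)
    show "integrable M (\<lambda>x. \<Sum>q\<le>Q. indicator {x \<in> space M. e * q < H x} x :: real)"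
      using sets by (intro Bochner_Integration.integrable_sum integrable_real_indicator)
        (simp_all add: emeasure_eq_measure)
    show "integrable M (\<lambda>x. H x / e + 1)"
      using int_H by simp
  qed (rule count)
  finally show "(\<Sum>q\<le>Q. measure M {x \<in> space M. e * q < H x}) \<le> (\<integral>x. H x / e + 1 \<partial>M)" .
qed simp

lemma ennreal_SUP_min_of_nat: "(SUP K::nat. min a (of_nat K)) = (a::ennreal)"
proof -
  have "(SUP K::nat. min a (of_nat K)) = min a (SUP K::nat. of_nat K)"
    by (simp add: inf_min[symmetric] inf_SUP)
  then show ?thesis
    by (simp add: ennreal_SUP_of_nat_eq_top)
qed

lemma limsup_div_le:
  fixes a :: "nat \<Rightarrow> 'b::complete_linorder"
  assumes m: "1 \<le> m"
  shows "limsup (\<lambda>n. a (n div m)) \<le> limsup a"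
proof -
  have "\<forall>\<^sub>F n in sequentially. a (n div m) < y" if y: "limsup a < y" for y
  proof -
    obtain Q where Q: "\<And>q. Q \<le> q \<Longrightarrow> a q < y"
      using Limsup_lessD[OF y] by (auto simp: eventually_sequentially)
    show ?thesis
    proof (rule eventually_sequentiallyI)
      fix n assume "Q * m \<le> n"
      then show "a (n div m) < y"
        using m by (intro Q) (simp add: less_eq_div_iff_mult_less_eq)
    qed
  qed
  then show ?thesis
    by (subst Limsup_le_iff) auto
qed

lemma AE_eq_of_nn_integral_le:
  fixes f g :: "'a \<Rightarrow> ennreal"
  assumes [measurable]: "f \<in> borel_measurable M" "g \<in> borel_measurable M"
    and le: "AE x in M. f x \<le> g x" and int_le: "(\<integral>\<^sup>+x. g x \<partial>M) \<le> (\<integral>\<^sup>+x. f x \<partial>M)"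
    and finite: "(\<integral>\<^sup>+x. g x \<partial>M) < \<infinity>"
  shows "AE x in M. g x = f x"
proof -
  have "(\<integral>\<^sup>+x. f x \<partial>M) \<noteq> \<infinity>"
    using nn_integral_mono_AE[OF le] finite by auto
  then have "(\<integral>\<^sup>+x. g x - f x \<partial>M) = (\<integral>\<^sup>+x. g x \<partial>M) - (\<integral>\<^sup>+x. f x \<partial>M)"
    using le by (intro nn_integral_diff) auto
  also have "\<dots> = 0"
    using int_le nn_integral_mono_AE[OF le] finite by (auto simp: diff_eq_0_iff_ennreal)
  finally have "AE x in M. g x - f x = 0"
    by (subst (asm) nn_integral_0_iff_AE) auto
  moreover have "AE x in M. g x < \<infinity>"
    using nn_integral_PInf_AE[of g M] finite by (auto simp: top.not_eq_extremum)
  ultimately show ?thesis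
    using le by eventually_elim (auto simp: diff_eq_0_iff_ennreal)
qed

section \<open>Measure-preserving maps\<close>

locale mpt = prob_space M for M :: "'a measure" +
  fixes T :: "'a \<Rightarrow> 'a"
  assumes T_measure_preserving: "T \<in> measure_preserving M M"
begin

lemma measurable_T [measurable]: "T \<in> measurable M M"
  and distr_T: "distr M M T = M"
  using T_measure_preserving by (auto simp: measure_preserving_def)

lemma measurable_Tn [measurable]: "T ^^ n \<in> measurable M M"
  by (induction n) auto

lemma distr_Tn: "distr M M (T ^^ n) = M"
proof (induction n)
  case (Suc n)
  have "distr M M (T ^^ Suc n) = distr (distr M M (T ^^ n)) M T"
    by (simp add: distr_distr)
  also have "\<dots> = M"
    using Suc distr_T by simp
  finally show ?case .
qed (simp add: distr_id2[symmetric] id_def)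

lemma Tn_in_space: "x \<in> space M \<Longrightarrow> (T ^^ n) x \<in> space M"
  using measurable_space[OF measurable_Tn] .

lemma mpt_Tn: "mpt M (T ^^ n)"
  by unfold_locales (simp add: measure_preserving_def distr_Tn)

lemma integral_comp_Tn:
  fixes f :: "'a \<Rightarrow> real"
  assumes "f \<in> borel_measurable M"
  shows "(\<integral>x. f ((T ^^ n) x) \<partial>M) = (\<integral>x. f x \<partial>M)"
  using integral_distr[OF measurable_Tn assms, of n] by (simp add: distr_Tn)

lemma integrable_comp_Tn:
  fixes f :: "'a \<Rightarrow> real"
  assumes "integrable M f"
  shows "integrable M (\<lambda>x. f ((T ^^ n) x))"
  using assms integrable_distr_eq[OF measurable_Tn, of f n] by (simp add: distr_Tn)

lemma measure_vimage_Tn: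
  "A \<in> sets M \<Longrightarrow> measure M ((T ^^ n) -` A \<inter> space M) = measure M A"
  using measure_distr[OF measurable_Tn, of A n] by (simp add: distr_Tn)

lemma AE_comp_Tn:
  assumes "AE x in M. P x"
  shows "AE x in M. P ((T ^^ n) x)"
proof (rule AE_distrD[OF measurable_Tn])
  show "AE x in distr M M (T ^^ n). P x"
    unfolding distr_Tn by (rule assms)
qed

lemma AE_all_Tn: "AE x in M. P x \<Longrightarrow> AE x in M. \<forall>n. P ((T ^^ n) x)"
  by (simp add: AE_all_countable AE_comp_Tn)

lemma integral_birkhoff_sum:
  fixes f :: "'a \<Rightarrow> real"
  assumes "integrable M f"
  shows "(\<integral>x. (\<Sum>j<n. f ((T ^^ j) x)) \<partial>M) = n * (\<integral>x. f x \<partial>M)"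
  using assms by (simp add: integrable_comp_Tn integral_comp_Tn borel_measurable_integrable)

lemma AE_invariant_of_subinvariant_real:
  fixes F :: "'a \<Rightarrow> real"
  assumes [measurable]: "F \<in> borel_measurable M" and bounded: "\<And>x. x \<in> space M \<Longrightarrow> \<bar>F x\<bar> \<le> C"
    and sub: "AE x in M. F x \<le> F (T x)"
  shows "AE x in M. F (T x) = F x"
proof -
  have int_F: "integrable M F"
    using bounded by (intro integrable_const_bound[of _ C]) auto
  have int_FT: "integrable M (\<lambda>x. F (T x))"
    using integrable_comp_Tn[OF int_F, of 1] by simp
  have "(\<integral>x. F (T x) - F x \<partial>M) = 0"
    using integral_comp_Tn[of F 1] int_F int_FT by simp
  then have "AE x in M. F (T x) - F x = 0"
    using sub int_F int_FT by (subst (asm) integral_nonneg_eq_0_iff_AE) auto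
  then show ?thesis by auto
qed

lemma AE_invariant_of_subinvariant:
  fixes F :: "'a \<Rightarrow> ennreal"
  assumes [measurable]: "F \<in> borel_measurable M" and sub: "AE x in M. F x \<le> F (T x)"
  shows "AE x in M. F (T x) = F x"
proof -
  define F' where "F' K x = enn2real (min (F x) (of_nat K))" for K :: nat and x
  have F'_ennreal: "ennreal (F' K x) = min (F x) (of_nat K)" for K x
    by (simp add: F'_def min_less_iff_disj of_nat_less_top ennreal_enn2real)
  have "AE x in M. F' K (T x) = F' K x" for K
  proof (rule AE_invariant_of_subinvariant_real[where C = K])
    show "F' K \<in> borel_measurable M" unfolding F'_def by measurable
    show "\<bar>F' K x\<bar> \<le> K" for x
      unfolding F'_def by (auto intro!: enn2real_leI simp: ennreal_of_nat_eq_real_of_nat[symmetric])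
    show "AE x in M. F' K x \<le> F' K (T x)"
      using sub by eventually_elim (auto simp: F'_def intro!: enn2real_mono min.mono
          simp: min_less_iff_disj of_nat_less_top)
  qed
  then have "AE x in M. \<forall>K. F' K (T x) = F' K x"
    by (simp add: AE_all_countable)
  then show ?thesis
  proof eventually_elim
    case (elim x)
    then have "min (F (T x)) (of_nat K) = min (F x) (of_nat K)" for K
      by (metis F'_ennreal)
    then have "(SUP K. min (F (T x)) (of_nat K)) = (SUP K. min (F x) (of_nat K))"
      by simp
    then show ?case
      by (simp only: ennreal_SUP_min_of_nat)
  qed
qed

lemma AE_invariant_along_orbit:
  assumes "AE x in M. F (T x) = F x"
  shows "AE x in M. \<forall>k. F ((T ^^ k) x) = F x"
  using AE_all_Tn[OF assms]
proof eventually_elim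
  case (elim x)
  show ?case
  proof
    fix k show "F ((T ^^ k) x) = F x"
      using elim by (induction k) auto
  qed
qed

lemma integral_le_by_covering:
  fixes u :: "nat \<Rightarrow> 'a \<Rightarrow> real" and G b :: "'a \<Rightarrow> real" and L n :: nat
  assumes n: "1 \<le> n" and int_u: "integrable M (u n)"
    and int_G: "integrable M G" and int_b: "integrable M b" and b_nonneg: "\<And>x. 0 \<le> b x"
    and B [measurable]: "B \<in> sets M"
    and sub: "AE x in M. \<forall>p q. 1 \<le> p \<longrightarrow> 1 \<le> q \<longrightarrow> u (p + q) x \<le> u p x + u q ((T ^^ p) x)"
    and one: "AE x in M. u 1 x \<le> G x + b x"
    and good: "AE x in M. x \<notin> B \<longrightarrow> (\<exists>N. 1 \<le> N \<and> N \<le> L \<and> u N x \<le> (\<Sum>i<N. G ((T ^^ i) x)))"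
  shows "(\<integral>x. u n x \<partial>M) \<le> n * (\<integral>x. G x \<partial>M) + n * (\<integral>x. indicator B x * b x \<partial>M) + L * (\<integral>x. b x \<partial>M)"
proof -
  define c where "c j = (if n < j + L then 1 else 0 :: real)" for j
  define f where "f j x = G x + indicator B x * b x + c j * b x" for j x
  have int_Bb: "integrable M (\<lambda>x. indicator B x * b x)"
    using integrable_real_mult_indicator[OF B int_b] by (simp add: mult.commute)
  have int_f: "integrable M (f j)" for j
    unfolding f_def using int_G int_Bb int_b by auto
  have "AE x in M. u n x \<le> (\<Sum>j<n. f j ((T ^^ j) x))"
    using AE_all_Tn[OF sub] AE_all_Tn[OF one] AE_all_Tn[OF good]
  proof eventually_elim
    case (elim x)
    have "u (n - 0) ((T ^^ 0) x) \<le> (\<Sum>j\<in>{0..<n}. G ((T ^^ j) x)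
        + (if \<not> (T ^^ j) x \<notin> B \<or> n < j + L then b ((T ^^ j) x) else 0))"
      by (rule subadditive_le_sum_by_covering[where w = "\<lambda>m k. u m ((T ^^ k) x)"])
        (use elim b_nonneg n in \<open>auto simp: funpow_add_apply\<close>)
    also have "\<dots> \<le> (\<Sum>j<n. f j ((T ^^ j) x))"
      by (auto simp: atLeast0LessThan f_def c_def b_nonneg intro!: sum_mono)
    finally show ?case by simp
  qed
  then have "(\<integral>x. u n x \<partial>M) \<le> (\<integral>x. (\<Sum>j<n. f j ((T ^^ j) x)) \<partial>M)"
    using int_u int_f by (intro integral_mono_AE Bochner_Integration.integrable_sum integrable_comp_Tn)
  also have "\<dots> = (\<Sum>j<n. \<integral>x. f j x \<partial>M)"
    using int_f by (simp add: integrable_comp_Tn integral_comp_Tn borel_measurable_integrable)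
  also have "\<dots> = n * (\<integral>x. G x \<partial>M) + n * (\<integral>x. indicator B x * b x \<partial>M) + (\<Sum>j<n. c j) * (\<integral>x. b x \<partial>M)"
    using int_G int_Bb int_b by (simp add: f_def sum.distrib sum_distrib_right distrib_left)
  also have "(\<Sum>j<n. c j) \<le> L"
  proof -
    have "(\<Sum>j<n. c j) = card {j\<in>{..<n}. n < j + L}"
      by (simp add: c_def sum.If_cases Int_def)
    also have "card {j\<in>{..<n}. n < j + L} \<le> card {n - L..<n}"
      by (intro card_mono) auto
    finally show ?thesis by simp
  qed
  finally show ?thesis
    using int_b b_nonneg by (simp add: mult_right_mono)
qed

lemma integral_le_by_averages:
  fixes h F :: "'a \<Rightarrow> real"
  assumes int_h: "integrable M h" and h_nonneg: "\<And>x. 0 \<le> h x"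
    and F [measurable]: "F \<in> borel_measurable M" and F_bounded: "\<And>x. \<bar>F x\<bar> \<le> K"
    and F_invariant: "AE x in M. \<forall>k. F ((T ^^ k) x) = F x"
    and F_le: "\<And>x e. x \<in> space M \<Longrightarrow> 0 < e \<Longrightarrow> \<exists>N\<ge>1. N * (F x - e) \<le> (\<Sum>i<N. h ((T ^^ i) x))"
  shows "(\<integral>x. F x \<partial>M) \<le> (\<integral>x. h x \<partial>M)"
proof (rule field_le_epsilon)
  fix e :: real assume e: "0 < e"
  have [measurable]: "h \<in> borel_measurable M"
    using int_h by simp
  have int_F: "integrable M F"
    using F_bounded by (intro integrable_const_bound[of _ K]) auto
  have K: "0 \<le> K"
    using F_bounded[of undefined] by simp
  define S where "S n x = (\<Sum>i<n. h ((T ^^ i) x))" for n x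
  define B where "B L = {x \<in> space M. \<not> (\<exists>N\<in>{1..L}. N * (F x - e) \<le> S N x)}" for L :: nat
  have B_sets [measurable]: "B L \<in> sets M" for L
    unfolding B_def S_def by measurable
  have bound: "(\<integral>x. F x \<partial>M) \<le> (\<integral>x. h x \<partial>M) + e + K * measure M (B L) + L * K / n"
    if n: "1 \<le> n" for L n :: nat
  proof -
    have "(\<integral>x. - S n x \<partial>M) \<le> n * (\<integral>x. e - F x \<partial>M) + n * (\<integral>x. indicator (B L) x * K \<partial>M)
        + L * (\<integral>x. K \<partial>M)"
    proof (rule integral_le_by_covering[OF n])
      show "AE x in M. \<forall>p q. 1 \<le> p \<longrightarrow> 1 \<le> q \<longrightarrow> - S (p + q) x \<le> - S p x + - S q ((T ^^ p) x)"
        by (simp add: S_def sum_lessThan_add funpow_add_apply add.commute)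
      show "AE x in M. - S 1 x \<le> e - F x + K"
      proof (rule AE_I2)
        fix x show "- S 1 x \<le> e - F x + K"
          using F_bounded[of x] h_nonneg[of x] e by (simp add: S_def abs_le_iff)
      qed
      show "AE x in M. x \<notin> B L \<longrightarrow> (\<exists>N. 1 \<le> N \<and> N \<le> L \<and> - S N x \<le> (\<Sum>i<N. e - F ((T ^^ i) x)))"
        using F_invariant AE_space
      proof eventually_elim
        case (elim x)
        show ?case
        proof
          assume "x \<notin> B L"
          then obtain N where N: "1 \<le> N" "N \<le> L" "N * (F x - e) \<le> S N x"
            using elim(2) by (auto simp: B_def)
          have "(\<Sum>i<N. e - F ((T ^^ i) x)) = - (N * (F x - e))"
            using elim(1) by (simp add: algebra_simps)
          then show "\<exists>N. 1 \<le> N \<and> N \<le> L \<and> - S N x \<le> (\<Sum>i<N. e - F ((T ^^ i) x))"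
            using N by auto
        qed
      qed
      show "integrable M (\<lambda>x. - S n x)"
        unfolding S_def using int_h
        by (intro Bochner_Integration.integrable_minus Bochner_Integration.integrable_sum integrable_comp_Tn)
      show "integrable M (\<lambda>x. e - F x)"
        using int_F by (intro Bochner_Integration.integrable_diff integrable_const)
    qed (use K B_sets in simp_all)
    then have "- (n * (\<integral>x. h x \<partial>M)) \<le> n * (e - (\<integral>x. F x \<partial>M)) + n * (K * measure M (B L)) + L * K"
      using int_h int_F by (simp add: S_def integral_birkhoff_sum prob_space mult.commute)
    then have "n * (\<integral>x. F x \<partial>M) \<le> n * ((\<integral>x. h x \<partial>M) + e + K * measure M (B L) + L * K / n)"
      using n by (simp add: algebra_simps)
    then show ?thesis
      using n by (simp add: mult_le_cancel_left_pos)
  qed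
  have "(\<lambda>L. measure M (B L)) \<longlonglongrightarrow> measure M (\<Inter>L. B L)"
  proof (rule finite_Lim_measure_decseq)
    show "decseq B"
      unfolding decseq_def B_def by force
  qed (use B_sets in auto)
  moreover have "(\<Inter>L. B L) = {}"
  proof (intro equalityI subsetI)
    fix x assume x: "x \<in> (\<Inter>L. B L)"
    then obtain N where "N \<ge> 1" "N * (F x - e) \<le> S N x"
      using F_le[of x e] e by (auto simp: B_def S_def)
    moreover have "x \<in> B N"
      using x by blast
    ultimately show "x \<in> {}"
      by (auto simp: B_def)
  qed simp
  ultimately have B_null: "(\<lambda>L. measure M (B L)) \<longlonglongrightarrow> 0"
    by simp
  have "(\<integral>x. F x \<partial>M) \<le> (\<integral>x. h x \<partial>M) + e + K * measure M (B L)" for L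
  proof (rule LIMSEQ_le_const)
    show "(\<lambda>n. (\<integral>x. h x \<partial>M) + e + K * measure M (B L) + L * K / n)
        \<longlonglongrightarrow> (\<integral>x. h x \<partial>M) + e + K * measure M (B L)"
      using tendsto_add[OF tendsto_const lim_const_over_n] by simp
  qed (use bound in auto)
  then show "(\<integral>x. F x \<partial>M) \<le> (\<integral>x. h x \<partial>M) + e"
  proof (intro LIMSEQ_le_const)
    show "(\<lambda>L. (\<integral>x. h x \<partial>M) + e + K * measure M (B L)) \<longlonglongrightarrow> (\<integral>x. h x \<partial>M) + e"
      using tendsto_add[OF tendsto_const tendsto_mult_right_zero[OF B_null]] by simp
  qed auto
qed

lemma nn_integral_limsup_birkhoff_average_le:
  fixes h :: "'a \<Rightarrow> real"
  assumes int_h: "integrable M h" and h_nonneg: "\<And>x. 0 \<le> h x"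
  shows "(\<integral>\<^sup>+x. limsup (\<lambda>n. ennreal ((\<Sum>i<n. h ((T ^^ i) x)) / n)) \<partial>M) \<le> ennreal (\<integral>x. h x \<partial>M)"
    (is "(\<integral>\<^sup>+x. ?A x \<partial>M) \<le> _")
proof -
  have [measurable]: "h \<in> borel_measurable M"
    using int_h by simp
  have "?A x \<le> ?A (T x)" for x
  proof (rule limsup_average_shift_le)
    show "(\<Sum>i<Suc n. h ((T ^^ i) x)) \<le> h x + (\<Sum>i<n. h ((T ^^ i) (T x)))" for n
      unfolding sum.lessThan_Suc_shift by (simp add: funpow_swap1)
  qed (simp add: h_nonneg sum_nonneg)
  moreover have "?A \<in> borel_measurable M"
    by measurable
  ultimately have A_invariant: "AE x in M. \<forall>k. ?A ((T ^^ k) x) = ?A x"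
    by (intro AE_invariant_along_orbit AE_invariant_of_subinvariant AE_I2)
  have "(\<integral>\<^sup>+x. min (?A x) (of_nat K) \<partial>M) \<le> ennreal (\<integral>x. h x \<partial>M)" for K :: nat
  proof -
    define F where "F x = enn2real (min (?A x) (of_nat K))" for x
    have F_ennreal: "ennreal (F x) = min (?A x) (of_nat K)" for x
      by (simp add: F_def min_less_iff_disj of_nat_less_top ennreal_enn2real)
    have F_bounded: "\<bar>F x\<bar> \<le> K" for x
      unfolding F_def by (auto intro!: enn2real_leI simp: ennreal_of_nat_eq_real_of_nat[symmetric])
    have F_measurable [measurable]: "F \<in> borel_measurable M"
      unfolding F_def by measurable
    have "(\<integral>x. F x \<partial>M) \<le> (\<integral>x. h x \<partial>M)"
    proof (rule integral_le_by_averages[OF int_h h_nonneg F_measurable F_bounded])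
      show "AE x in M. \<forall>k. F ((T ^^ k) x) = F x"
        using A_invariant by eventually_elim (simp add: F_def)
      show "\<exists>N\<ge>1. N * (F x - e) \<le> (\<Sum>i<N. h ((T ^^ i) x))" if "0 < e" for x e
      proof (cases "F x \<le> e")
        case True
        then show ?thesis
          using h_nonneg[of x] by (intro exI[of _ 1]) simp
      next
        case False
        have "ennreal (F x - e) < ennreal (F x)"
          using False \<open>0 < e\<close> by (intro ennreal_lessI) auto
        also have "\<dots> \<le> ?A x"
          by (simp add: F_ennreal)
        finally have "ennreal (F x - e) < ?A x" .
        then have "\<exists>\<^sub>F n in sequentially. ennreal (F x - e) < ennreal ((\<Sum>i<n. h ((T ^^ i) x)) / n) \<and> 1 \<le> n"
          by (intro frequently_eventually_frequently frequently_less_Limsup eventually_ge_at_top)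
        then obtain n where "ennreal (F x - e) < ennreal ((\<Sum>i<n. h ((T ^^ i) x)) / n)" and n: "1 \<le> n"
          by (auto dest: frequently_ex)
        then have "F x - e < (\<Sum>i<n. h ((T ^^ i) x)) / n"
          using False by (simp add: ennreal_less_iff)
        then have "n * (F x - e) \<le> (\<Sum>i<n. h ((T ^^ i) x))"
          using n by (simp add: less_divide_eq mult.commute)
        then show ?thesis
          using n by blast
      qed
    qed
    have "(\<integral>\<^sup>+x. min (?A x) (of_nat K) \<partial>M) = (\<integral>\<^sup>+x. ennreal (F x) \<partial>M)"
      by (simp add: F_ennreal)
    also have "\<dots> = ennreal (\<integral>x. F x \<partial>M)"
    proof (rule nn_integral_eq_integral)
      show "integrable M F"
        using F_bounded by (intro integrable_const_bound[of _ K]) auto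
    qed (simp add: F_def)
    also have "\<dots> \<le> ennreal (\<integral>x. h x \<partial>M)"
      using \<open>(\<integral>x. F x \<partial>M) \<le> (\<integral>x. h x \<partial>M)\<close> by (rule ennreal_leI)
    finally show ?thesis .
  qed
  then have "(SUP K. \<integral>\<^sup>+x. min (?A x) (of_nat K) \<partial>M) \<le> ennreal (\<integral>x. h x \<partial>M)"
    by (rule SUP_least)
  moreover have "(SUP K. \<integral>\<^sup>+x. min (?A x) (of_nat K) \<partial>M) = (\<integral>\<^sup>+x. (SUP K. min (?A x) (of_nat K)) \<partial>M)"
    by (rule nn_integral_monotone_convergence_SUP[symmetric])
      (auto simp: incseq_def le_fun_def intro: min.coboundedI2)
  ultimately show ?thesis
    by (simp only: ennreal_SUP_min_of_nat)
qed

subsection \<open>Growth of functions along orbits\<close>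

lemma AE_Tn_div_tendsto_0:
  fixes H :: "'a \<Rightarrow> real"
  assumes int_H: "integrable M H" and H_nonneg: "\<And>x. 0 \<le> H x"
  shows "AE x in M. (\<lambda>n. H ((T ^^ n) x) / n) \<longlonglongrightarrow> 0"
proof -
  have [measurable]: "H \<in> borel_measurable M"
    using int_H by simp
  have level: "AE x in M. \<forall>\<^sub>F n in sequentially. H ((T ^^ n) x) \<le> e * n" if e: "0 < e" for e :: real
  proof -
    define A where "A n = (T ^^ n) -` {x \<in> space M. e * n < H x} \<inter> space M" for n
    have [measurable]: "A n \<in> sets M" for n
      unfolding A_def by measurable
    have "summable (\<lambda>n. measure M (A n))"
      unfolding A_def using summable_measure_gt_multiple[OF int_H H_nonneg e]
      by (subst measure_vimage_Tn) auto
    then have "AE x in M. \<forall>\<^sub>F n in sequentially. x \<in> space M - A n"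
      by (intro borel_cantelli_AE1) (auto simp: emeasure_eq_measure)
    then show ?thesis
      by (rule AE_mp) (auto intro!: AE_I2 elim!: eventually_mono simp: A_def Tn_in_space mult.commute)
  qed
  have "AE x in M. \<forall>r::nat. \<forall>\<^sub>F n in sequentially. H ((T ^^ n) x) \<le> n / Suc r"
    unfolding AE_all_countable
  proof
    fix r :: nat show "AE x in M. \<forall>\<^sub>F n in sequentially. H ((T ^^ n) x) \<le> n / Suc r"
      using level[of "1 / Suc r"] by simp
  qed
  then show ?thesis
  proof eventually_elim
    case (elim x)
    show ?case
    proof (rule order_tendstoI)
      fix a :: real assume "0 < a"
      then obtain r :: nat where r: "1 / Suc r < a"
        by (metis nat_approx_posE of_nat_Suc)
      show "\<forall>\<^sub>F n in sequentially. H ((T ^^ n) x) / n < a"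
        using elim[rule_format, of r] eventually_gt_at_top[of 0]
      proof eventually_elim
        case (elim n)
        then have "H ((T ^^ n) x) / n \<le> 1 / Suc r"
          by (simp add: divide_le_eq field_simps)
        then show ?case
          using r by linarith
      qed
    qed (simp add: H_nonneg order.strict_trans2)
  qed
qed

lemma AE_frequently_Tn_less:
  fixes D :: "'a \<Rightarrow> real"
  assumes [measurable]: "D \<in> borel_measurable M"
  shows "AE x in M. \<forall>e>0. \<exists>\<^sub>F n in sequentially. D ((T ^^ n) x) < e * real n"
proof -
  have level: "AE x in M. \<exists>\<^sub>F n in sequentially. D ((T ^^ n) x) < e * n" if e: "0 < e" for e :: real
  proof -
    define Y where "Y N = {x \<in> space M. \<forall>n\<ge>N. e * n \<le> D ((T ^^ n) x)}" for N
    define A where "A n = {x \<in> space M. e * n \<le> D x}" for n :: nat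
    have [measurable]: "Y N \<in> sets M" "A n \<in> sets M" for N n
      unfolding Y_def A_def by measurable
    have "(\<lambda>n. measure M (A n)) \<longlonglongrightarrow> measure M (\<Inter>n. A n)"
    proof (rule finite_Lim_measure_decseq)
      show "decseq A"
        unfolding decseq_def A_def using e by (auto intro: order_trans[rotated])
    qed auto
    moreover have "(\<Inter>n. A n) = {}"
    proof (intro equalityI subsetI)
      fix x assume x: "x \<in> (\<Inter>n. A n)"
      obtain n :: nat where "D x / e < n"
        using reals_Archimedean2 by blast
      moreover have "e * n \<le> D x"
        using x by (auto simp: A_def)
      ultimately show "x \<in> {}"
        using e by (simp add: divide_less_eq mult.commute)
    qed simp
    ultimately have A_null: "(\<lambda>n. measure M (A n)) \<longlonglongrightarrow> 0"
      by simp
    have "measure M (Y N) \<le> 0" for N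
    proof (rule LIMSEQ_le_const[OF A_null], intro exI allI impI)
      fix n assume "N \<le> n"
      then have "Y N \<subseteq> (T ^^ n) -` A n \<inter> space M"
        by (auto simp: Y_def A_def Tn_in_space)
      then have "measure M (Y N) \<le> measure M ((T ^^ n) -` A n \<inter> space M)"
        by (intro finite_measure_mono) auto
      then show "measure M (Y N) \<le> measure M (A n)"
        by (simp add: measure_vimage_Tn)
    qed
    then have "Y N \<in> null_sets M" for N
      by (metis \<open>Y N \<in> sets M\<close> measure_le_0_iff null_setsI emeasure_eq_measure ennreal_0)
    then have "(\<Union>N. Y N) \<in> null_sets M"
      by auto
    then have "AE x in M. x \<notin> (\<Union>N. Y N)"
      by (rule AE_not_in)
    then show ?thesis
      by (rule AE_mp) (auto intro!: AE_I2 simp: Y_def frequently_sequentially not_le)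
  qed
  have "AE x in M. \<forall>r::nat. \<exists>\<^sub>F n in sequentially. D ((T ^^ n) x) < n / Suc r"
    unfolding AE_all_countable
  proof
    fix r :: nat show "AE x in M. \<exists>\<^sub>F n in sequentially. D ((T ^^ n) x) < n / Suc r"
      using level[of "1 / Suc r"] by simp
  qed
  then show ?thesis
  proof eventually_elim
    case (elim x)
    show ?case
    proof (intro allI impI)
      fix e :: real assume "0 < e"
      then obtain r :: nat where "1 / Suc r < e"
        by (metis nat_approx_posE of_nat_Suc)
      then have "n / Suc r \<le> e * n" for n :: nat
        by (metis divide_inverse inverse_eq_divide less_eq_real_def mult.commute mult_left_mono of_nat_0_le_iff)
      then show "\<exists>\<^sub>F n in sequentially. D ((T ^^ n) x) < e * real n"
        using elim[rule_format, of r] by (auto elim!: frequently_elim1 intro: less_le_trans)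
    qed
  qed
qed

lemma AE_lim_le_of_bound_measurable_at_orbit:
  fixes a b :: "nat \<Rightarrow> 'a \<Rightarrow> real" and \<Phi> \<Psi> :: "'a \<Rightarrow> real"
  assumes \<Phi> [measurable]: "\<Phi> \<in> borel_measurable M"
    and bound: "AE x in M. \<forall>n. b n x \<le> a n x + \<Psi> x + \<Phi> ((T ^^ n) x)"
    and conv_a: "AE x in M. convergent (\<lambda>n. a n x / n)"
    and conv_b: "AE x in M. convergent (\<lambda>n. b n x / n)"
  shows "AE x in M. lim (\<lambda>n. b n x / n) \<le> lim (\<lambda>n. a n x / n)"
  using AE_frequently_Tn_less[OF \<Phi>] bound conv_a conv_b
proof eventually_elim
  case (elim x)
  define c where "c n = b n x / n - a n x / n - \<Psi> x / n" for n
  have "c \<longlonglongrightarrow> lim (\<lambda>n. b n x / n) - lim (\<lambda>n. a n x / n) - 0"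
    unfolding c_def using elim(3,4)
    by (intro tendsto_diff lim_const_over_n) (simp_all add: convergent_LIMSEQ_iff)
  then have c_lim: "c \<longlonglongrightarrow> lim (\<lambda>n. b n x / n) - lim (\<lambda>n. a n x / n)"
    by simp
  have c_small: "c n < e" if "\<Phi> ((T ^^ n) x) < e * real n" "0 < n" for n and e :: real
  proof -
    have "c n \<le> \<Phi> ((T ^^ n) x) / n"
      using elim(2) unfolding c_def diff_divide_distrib[symmetric]
      by (simp add: divide_right_mono algebra_simps)
    also have "\<dots> < e"
      using that by (simp add: pos_divide_less_eq)
    finally show ?thesis .
  qed
  have "lim (\<lambda>n. b n x / n) - lim (\<lambda>n. a n x / n) \<le> 0 + e" if e: "0 < e" for e
  proof (rule ccontr)
    assume "\<not> ?thesis"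
    then have "\<forall>\<^sub>F n in sequentially. e < c n"
      by (intro order_tendstoD(1)[OF c_lim]) simp
    moreover have "\<exists>\<^sub>F n in sequentially. \<Phi> ((T ^^ n) x) < e * n \<and> 0 < n"
      using frequently_eventually_frequently[OF elim(1)[rule_format, OF e] eventually_gt_at_top[of 0]] .
    ultimately have "\<exists>\<^sub>F n in sequentially. (\<Phi> ((T ^^ n) x) < e * n \<and> 0 < n) \<and> e < c n"
      using frequently_eventually_frequently by blast
    then obtain n where "\<Phi> ((T ^^ n) x) < e * n" "0 < n" "e < c n"
      using frequently_ex by blast
    then show False
      using c_small by fastforce
  qed
  then have "lim (\<lambda>n. b n x / n) - lim (\<lambda>n. a n x / n) \<le> 0"
    by (rule field_le_epsilon)
  then show ?case
    by simp
qed

lemma frequently_Tn_mem: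
  assumes [measurable]: "A \<in> sets M" and "0 < measure M A"
  obtains z where "z \<in> space M" "\<exists>\<^sub>F n in sequentially. (T ^^ n) z \<in> A"
proof -
  define W where "W k = (\<Union>n\<in>{k..}. (T ^^ n) -` A \<inter> space M)" for k
  have [measurable]: "W k \<in> sets M" for k
    unfolding W_def by measurable
  have "measure M A \<le> measure M (W k)" for k
  proof -
    have "measure M A = measure M ((T ^^ k) -` A \<inter> space M)"
      by (simp add: measure_vimage_Tn)
    also have "\<dots> \<le> measure M (W k)"
      unfolding W_def by (intro finite_measure_mono) auto
    finally show ?thesis .
  qed
  moreover have "(\<lambda>k. measure M (W k)) \<longlonglongrightarrow> measure M (\<Inter>k. W k)"
  proof (rule finite_Lim_measure_decseq)
    show "decseq W"
      unfolding decseq_def W_def by (auto intro: order_trans)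
  qed auto
  ultimately have "measure M A \<le> measure M (\<Inter>k. W k)"
    by (intro LIMSEQ_le_const) auto
  then have "(\<Inter>k. W k) \<noteq> {}"
    using assms(2) by auto
  then obtain z where "z \<in> (\<Inter>k. W k)"
    by blast
  then show ?thesis
    by (intro that[of z]) (auto simp: W_def frequently_sequentially)
qed

lemma null_sets_of_gap_bound:
  fixes a b :: "nat \<Rightarrow> 'a \<Rightarrow> real" and \<Phi> \<Psi> La Lb :: "'a \<Rightarrow> real" and N :: nat and e :: real
  assumes S: "mpt M S" and T_S: "\<And>z. z \<in> space M \<Longrightarrow> T (S z) = z" and D [measurable]: "D \<in> sets M"
    and bound: "\<And>y n. y \<in> D \<Longrightarrow> a n y \<le> b n y + \<Phi> y + \<Psi> ((T ^^ n) y)"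
    and close: "\<And>y n. y \<in> D \<Longrightarrow> N \<le> n \<Longrightarrow> \<bar>a n y / n - La y\<bar> \<le> e \<and> \<bar>b n y / n - Lb y\<bar> \<le> e"
    and gap: "\<And>y. y \<in> D \<Longrightarrow> Lb y + 4 * e < La y"
    and small: "\<And>y. y \<in> D \<Longrightarrow> \<Phi> y \<le> N * e"
    and e: "0 < e"
  shows "D \<in> null_sets M"
proof (rule ccontr)
  interpret S: mpt M S
    by (rule S)
  have T_Sn: "(T ^^ n) ((S ^^ n) z) = z" if z: "z \<in> space M" for n z
  proof (induction n)
    case (Suc n)
    have "(T ^^ Suc n) ((S ^^ Suc n) z) = (T ^^ n) (T (S ((S ^^ n) z)))"
      by (simp only: funpow_Suc_right[where f = T] funpow.simps(2)[where f = S] comp_apply)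
    also have "\<dots> = z"
      using Suc S.Tn_in_space[OF z] T_S by simp
    finally show ?case .
  qed simp
  assume "D \<notin> null_sets M"
  then have "0 < measure M D"
    by (metis D emeasure_eq_measure ennreal_0 measure_nonneg not_le_imp_less null_setsI order_antisym)
  then obtain z where z: "z \<in> space M" and recurrent: "\<exists>\<^sub>F n in sequentially. (S ^^ n) z \<in> D"
    by (rule S.frequently_Tn_mem[OF D])
  \<comment> \<open>\<Psi> need not be measurable: it is only evaluated at the recurrent point z.\<close>
  obtain k :: nat where k: "\<Psi> z / e < k"
    using reals_Archimedean2 by blast
  obtain n where n: "max k (max N 1) \<le> n" and y: "(S ^^ n) z \<in> D"
    using recurrent unfolding frequently_sequentially by blast
  define y where "y = (S ^^ n) z"
  have "a n y \<le> b n y + \<Phi> y + \<Psi> z"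
    using bound[of y n] y T_Sn[OF z] by (simp add: y_def)
  then have "a n y / n \<le> b n y / n + \<Phi> y / n + \<Psi> z / n"
    by (simp add: add_divide_distrib[symmetric] divide_right_mono)
  moreover have "\<Phi> y / n \<le> e"
  proof -
    have "\<Phi> y \<le> N * e"
      using small y by (simp add: y_def)
    also have "\<dots> \<le> n * e"
      using n e by (intro mult_right_mono) auto
    finally show ?thesis
      using n by (simp add: pos_divide_le_eq mult.commute)
  qed
  moreover have "\<Psi> z / n < e"
  proof -
    have "\<Psi> z < k * e"
      using k e by (simp add: pos_divide_less_eq)
    also have "\<dots> \<le> n * e"
      using n e by (intro mult_right_mono) auto
    finally show ?thesis
      using n by (simp add: pos_divide_less_eq mult.commute)
  qed
  moreover have "Lb y + 4 * e < La y" "\<bar>a n y / n - La y\<bar> \<le> e" "\<bar>b n y / n - Lb y\<bar> \<le> e"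
    using gap close n y by (auto simp: y_def)
  ultimately show False
    by linarith
qed

lemma AE_lim_le_of_bound_measurable_at_start:
  fixes a b :: "nat \<Rightarrow> 'a \<Rightarrow> real" and \<Phi> \<Psi> :: "'a \<Rightarrow> real"
  assumes S: "mpt M S" and T_S: "\<And>z. z \<in> space M \<Longrightarrow> T (S z) = z"
    and [measurable]: "\<And>n. a n \<in> borel_measurable M" "\<And>n. b n \<in> borel_measurable M"
      "\<Phi> \<in> borel_measurable M"
    and bound: "AE x in M. \<forall>n. a n x \<le> b n x + \<Phi> x + \<Psi> ((T ^^ n) x)"
    and conv_a: "AE x in M. convergent (\<lambda>n. a n x / n)"
    and conv_b: "AE x in M. convergent (\<lambda>n. b n x / n)"
  shows "AE x in M. lim (\<lambda>n. a n x / n) \<le> lim (\<lambda>n. b n x / n)"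
proof -
  define Q where "Q x \<longleftrightarrow> (\<forall>n. a n x \<le> b n x + \<Phi> x + \<Psi> ((T ^^ n) x))
    \<and> convergent (\<lambda>n. a n x / n) \<and> convergent (\<lambda>n. b n x / n)" for x
  have "AE x in M. Q x"
    using bound conv_a conv_b by eventually_elim (simp add: Q_def)
  then obtain N0 where N0: "{x \<in> space M. \<not> Q x} \<subseteq> N0" "emeasure M N0 = 0" "N0 \<in> sets M"
    by (rule AE_E)
  define La where "La x = lim (\<lambda>n. a n x / n)" for x
  define Lb where "Lb x = lim (\<lambda>n. b n x / n)" for x
  define D where "D e N = {x \<in> space M - N0. Lb x + 4 * e < La x \<and> \<Phi> x \<le> N * e
    \<and> (\<forall>n\<ge>N. \<bar>a n x / n - La x\<bar> \<le> e \<and> \<bar>b n x / n - Lb x\<bar> \<le> e)}" for e :: real and N :: nat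
  have "D (1 / Suc r) N \<in> null_sets M" for r N
  proof (rule null_sets_of_gap_bound[OF S T_S, where La = La and Lb = Lb and N = N and e = "1 / Suc r"])
    show "D (1 / Suc r) N \<in> sets M"
      unfolding D_def La_def Lb_def using N0(3) by measurable
    show "a n y \<le> b n y + \<Phi> y + \<Psi> ((T ^^ n) y)" if "y \<in> D (1 / Suc r) N" for y n
      using that N0(1) by (auto simp: D_def Q_def)
  qed (auto simp: D_def)
  then have "AE x in M. \<forall>r N. x \<notin> D (1 / Suc r) N"
    by (simp add: AE_all_countable AE_not_in)
  moreover have "AE x in M. x \<notin> N0"
    using N0 by (intro AE_not_in) (simp add: null_sets_def)
  ultimately show ?thesis
    using \<open>AE x in M. Q x\<close> AE_space
  proof eventually_elim
    case (elim x)
    show ?case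
      unfolding La_def[symmetric] Lb_def[symmetric]
    proof (rule ccontr)
      assume "\<not> La x \<le> Lb x"
      then have "0 < (La x - Lb x) / 4"
        by simp
      then obtain r :: nat where "1 / Suc r < (La x - Lb x) / 4"
        by (rule nat_approx_posE)
      then have r: "Lb x + 4 * (1 / Suc r) < La x"
        by (simp add: field_simps)
      have "(\<lambda>n. a n x / n) \<longlonglongrightarrow> La x" "(\<lambda>n. b n x / n) \<longlonglongrightarrow> Lb x"
        using elim(3) by (simp_all add: Q_def La_def Lb_def convergent_LIMSEQ_iff)
      then have "\<forall>\<^sub>F n in sequentially. \<bar>a n x / n - La x\<bar> < 1 / Suc r \<and> \<bar>b n x / n - Lb x\<bar> < 1 / Suc r"
        by (intro eventually_conj) (auto dest!: tendstoD[of _ _ _ "1 / Suc r"] simp: dist_real_def)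
      then obtain N1 where N1: "\<forall>n\<ge>N1. \<bar>a n x / n - La x\<bar> \<le> 1 / Suc r \<and> \<bar>b n x / n - Lb x\<bar> \<le> 1 / Suc r"
        unfolding eventually_sequentially by (meson less_imp_le)
      obtain N2 :: nat where "\<Phi> x * Suc r \<le> N2"
        using real_arch_simple by blast
      then have "\<Phi> x \<le> max N1 N2 * (1 / Suc r)"
        by (simp add: pos_le_divide_eq of_nat_max)
      moreover have "\<forall>n\<ge>max N1 N2. \<bar>a n x / n - La x\<bar> \<le> 1 / Suc r \<and> \<bar>b n x / n - Lb x\<bar> \<le> 1 / Suc r"
        using N1 by simp
      ultimately have "x \<in> D (1 / Suc r) (max N1 N2)"
        using elim(2,4) r unfolding D_def by blast
      then show False
        using elim(1) by blast
    qed
  qed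
qed

end

section \<open>Kingman's subadditive ergodic theorem\<close>

locale subadditive_process = mpt +
  fixes g :: "nat \<Rightarrow> 'a \<Rightarrow> real"
  assumes g_measurable [measurable]: "\<And>n. g n \<in> borel_measurable M"
    and g_nonneg: "\<And>n x. 0 \<le> g n x"
    and integrable_g1: "integrable M (g 1)"
    and g_subadditive: "AE x in M. \<forall>p q. g (p + q) x \<le> g p x + g q ((T ^^ p) x)"
begin

lemma AE_g_le_sum_g1: "AE x in M. \<forall>s\<ge>1. g s x \<le> (\<Sum>i<s. g 1 ((T ^^ i) x))"
  using g_subadditive
proof eventually_elim
  case (elim x)
  show ?case
  proof (intro allI impI)
    fix s :: nat assume "1 \<le> s"
    then show "g s x \<le> (\<Sum>i<s. g 1 ((T ^^ i) x))"
    proof (induction s rule: dec_induct)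
      case (step s)
      have "g (s + 1) x \<le> g s x + g 1 ((T ^^ s) x)"
        using elim by blast
      then show ?case
        using step by simp
    qed simp
  qed
qed

lemma integrable_g:
  assumes "1 \<le> n"
  shows "integrable M (g n)"
proof (rule Bochner_Integration.integrable_bound)
  show "integrable M (\<lambda>x. \<Sum>i<n. g 1 ((T ^^ i) x))"
    by (intro Bochner_Integration.integrable_sum integrable_comp_Tn integrable_g1)
  show "AE x in M. norm (g n x) \<le> norm (\<Sum>i<n. g 1 ((T ^^ i) x))"
    using AE_g_le_sum_g1 by eventually_elim (use assms in \<open>simp add: g_nonneg sum_nonneg\<close>)
qed simp

lemma AE_g_le_blocks:
  assumes "1 \<le> m"
  shows "AE x in M. \<forall>q\<ge>1. g (q * m) x \<le> (\<Sum>j<q. g m (((T ^^ m) ^^ j) x))"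
  using g_subadditive
proof eventually_elim
  case (elim x)
  show ?case
  proof (intro allI impI)
    fix q :: nat assume "1 \<le> q"
    then show "g (q * m) x \<le> (\<Sum>j<q. g m (((T ^^ m) ^^ j) x))"
    proof (induction q rule: dec_induct)
      case (step q)
      have "g (q * m + m) x \<le> g (q * m) x + g m ((T ^^ (q * m)) x)"
        using elim by blast
      then show ?case
        using step by (simp add: funpow_mult mult.commute add.commute)
    qed simp
  qed
qed

lemma AE_g_le_blocks_remainder:
  assumes m: "1 \<le> m"
  shows "AE x in M. \<forall>n\<ge>m. g n x \<le> (\<Sum>j<n div m. g m (((T ^^ m) ^^ j) x))
    + (\<Sum>i<m. g 1 ((T ^^ i) (((T ^^ m) ^^ (n div m)) x)))"
  using AE_g_le_blocks[OF m] g_subadditive AE_all_Tn[OF AE_g_le_sum_g1]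
proof eventually_elim
  case (elim x)
  show ?case
  proof (intro allI impI)
    fix n assume "m \<le> n"
    define q where "q = n div m"
    define r where "r = n mod m"
    define y where "y = ((T ^^ m) ^^ q) x"
    have n: "n = q * m + r"
      by (simp add: q_def r_def)
    have q: "1 \<le> q"
      using m \<open>m \<le> n\<close> by (simp add: q_def Suc_le_eq div_greater_zero_iff)
    have r: "r < m"
      using m by (simp add: r_def)
    have y: "y = (T ^^ (q * m)) x"
      by (simp add: y_def funpow_mult mult.commute)
    have blocks: "g (q * m) x \<le> (\<Sum>j<q. g m (((T ^^ m) ^^ j) x))"
      using elim(1) q by blast
    have rest: "0 \<le> (\<Sum>i<m. g 1 ((T ^^ i) y))"
      by (simp add: g_nonneg sum_nonneg)
    have "g n x \<le> (\<Sum>j<q. g m (((T ^^ m) ^^ j) x)) + (\<Sum>i<m. g 1 ((T ^^ i) y))"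
    proof (cases "r = 0")
      case True
      then show ?thesis
        using n blocks rest by simp
    next
      case False
      have "g n x \<le> g (q * m) x + g r y"
        using elim(2) n y by simp
      also have "g r y \<le> (\<Sum>i<r. g 1 ((T ^^ i) y))"
        using elim(3) False unfolding y by (simp add: funpow_add_apply)
      also have "\<dots> \<le> (\<Sum>i<m. g 1 ((T ^^ i) y))"
        using r by (intro sum_mono2) (auto simp: g_nonneg)
      finally show ?thesis
        using blocks by simp
    qed
    then show "g n x \<le> (\<Sum>j<n div m. g m (((T ^^ m) ^^ j) x))
        + (\<Sum>i<m. g 1 ((T ^^ i) (((T ^^ m) ^^ (n div m)) x)))"
      by (simp add: q_def y_def)
  qed
qed

definition g_limsup :: "'a \<Rightarrow> ennreal" where
  "g_limsup x = limsup (\<lambda>n. ennreal (g n x / n))"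

definition g_liminf :: "'a \<Rightarrow> ennreal" where
  "g_liminf x = liminf (\<lambda>n. ennreal (g n x / n))"

lemma g_limsup_measurable [measurable]: "g_limsup \<in> borel_measurable M"
  unfolding g_limsup_def by measurable

lemma g_liminf_measurable [measurable]: "g_liminf \<in> borel_measurable M"
  unfolding g_liminf_def by measurable

lemma g_liminf_le_limsup: "g_liminf x \<le> g_limsup x"
  unfolding g_liminf_def g_limsup_def by (simp add: Liminf_le_Limsup)

lemma AE_g_limsup_le_block_average:
  assumes m: "1 \<le> m"
  shows "AE x in M. g_limsup x \<le> limsup (\<lambda>q. ennreal ((\<Sum>j<q. g m (((T ^^ m) ^^ j) x) / m) / q))"
proof -
  interpret Tm: mpt M "T ^^ m"
    by (rule mpt_Tn)
  define H where "H y = (\<Sum>i<m. g 1 ((T ^^ i) y))" for y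
  have H_nonneg: "0 \<le> H y" for y
    by (simp add: H_def g_nonneg sum_nonneg)
  have "AE x in M. (\<lambda>q. H (((T ^^ m) ^^ q) x) / q) \<longlonglongrightarrow> 0"
    using H_nonneg unfolding H_def
    by (intro Tm.AE_Tn_div_tendsto_0 Bochner_Integration.integrable_sum integrable_comp_Tn integrable_g1)
  with AE_g_le_blocks_remainder[OF m] show ?thesis
  proof eventually_elim
    case (elim x)
    define A where "A q = (\<Sum>j<q. g m (((T ^^ m) ^^ j) x) / m) / q" for q
    have A_nonneg: "0 \<le> A q" for q
      by (simp add: A_def g_nonneg sum_nonneg)
    show "g_limsup x \<le> limsup (\<lambda>q. ennreal (A q))"
    proof (rule ennreal_le_epsilon)
      fix e :: real assume e: "0 < e"
      obtain Q where Q: "\<And>q. Q \<le> q \<Longrightarrow> H (((T ^^ m) ^^ q) x) / q < e"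
        using order_tendstoD(2)[OF elim(2) e] by (auto simp: eventually_sequentially)
      have "\<forall>\<^sub>F n in sequentially. ennreal (g n x / n) \<le> ennreal e + ennreal (A (n div m))"
      proof (rule eventually_sequentiallyI)
        fix n assume n: "(Q + 1) * m \<le> n"
        define q where "q = n div m"
        have q: "Q + 1 \<le> q"
          using n m by (simp add: q_def less_eq_div_iff_mult_less_eq)
        have "m \<le> n"
          using n order_trans[of m "(Q + 1) * m" n] by simp
        have "q * m \<le> n"
          by (simp add: q_def div_times_less_eq_dividend)
        then have qm_le_n: "real q * m \<le> n"
          by (metis of_nat_le_iff of_nat_mult)
        have "q \<le> n"
          using m \<open>q * m \<le> n\<close> by (metis mult_le_mono2 mult.right_neutral order_trans)
        then have q_le_n: "real q \<le> n"
          by simp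
        have q_pos: "0 < real q"
          using q by simp
        have "g n x / n \<le> ((\<Sum>j<q. g m (((T ^^ m) ^^ j) x)) + H (((T ^^ m) ^^ q) x)) / n"
        proof (rule divide_right_mono)
          show "g n x \<le> (\<Sum>j<q. g m (((T ^^ m) ^^ j) x)) + H (((T ^^ m) ^^ q) x)"
            using elim(1) \<open>m \<le> n\<close> unfolding q_def H_def by blast
        qed simp
        also have "\<dots> = (\<Sum>j<q. g m (((T ^^ m) ^^ j) x)) / n + H (((T ^^ m) ^^ q) x) / n"
          by (rule add_divide_distrib)
        also have "(\<Sum>j<q. g m (((T ^^ m) ^^ j) x)) / n \<le> (\<Sum>j<q. g m (((T ^^ m) ^^ j) x)) / (q * m)"
          using qm_le_n q_pos m \<open>m \<le> n\<close>
          by (intro divide_left_mono) (auto simp: g_nonneg sum_nonneg zero_less_mult_iff)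
        also have "\<dots> = A q"
          by (simp add: A_def sum_divide_distrib[symmetric] divide_divide_eq_left mult.commute)
        also have "H (((T ^^ m) ^^ q) x) / n \<le> H (((T ^^ m) ^^ q) x) / q"
          using q_le_n q_pos H_nonneg by (intro divide_left_mono) auto
        also have "\<dots> < e"
          using Q q by simp
        finally have "g n x / n \<le> e + A q"
          by simp
        then have "ennreal (g n x / n) \<le> ennreal (e + A q)"
          by (rule ennreal_leI)
        then show "ennreal (g n x / n) \<le> ennreal e + ennreal (A (n div m))"
          using e A_nonneg by (simp add: q_def ennreal_plus)
      qed
      then have "g_limsup x \<le> limsup (\<lambda>n. ennreal e + ennreal (A (n div m)))"
        unfolding g_limsup_def by (rule Limsup_mono)
      also have "\<dots> = ennreal e + limsup (\<lambda>n. ennreal (A (n div m)))"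
        by (simp add: Limsup_const_add)
      also have "\<dots> \<le> ennreal e + limsup (\<lambda>q. ennreal (A q))"
        by (intro add_left_mono limsup_div_le m)
      finally show "g_limsup x \<le> limsup (\<lambda>q. ennreal (A q)) + ennreal e"
        by (simp add: add.commute)
    qed
  qed
qed

lemma nn_integral_g_limsup_le:
  assumes m: "1 \<le> m"
  shows "(\<integral>\<^sup>+x. g_limsup x \<partial>M) \<le> ennreal ((\<integral>x. g m x \<partial>M) / m)"
proof -
  interpret Tm: mpt M "T ^^ m"
    by (rule mpt_Tn)
  have "(\<integral>\<^sup>+x. g_limsup x \<partial>M)
      \<le> (\<integral>\<^sup>+x. limsup (\<lambda>q. ennreal ((\<Sum>j<q. g m (((T ^^ m) ^^ j) x) / m) / q)) \<partial>M)"
    by (rule nn_integral_mono_AE[OF AE_g_limsup_le_block_average[OF m]])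
  also have "\<dots> \<le> ennreal (\<integral>x. g m x / m \<partial>M)"
    using integrable_g[OF m] by (intro Tm.nn_integral_limsup_birkhoff_average_le) (auto simp: g_nonneg)
  finally show ?thesis
    by simp
qed

lemma nn_integral_g_limsup_finite: "(\<integral>\<^sup>+x. g_limsup x \<partial>M) < \<infinity>"
  using nn_integral_g_limsup_le[of 1] by (simp add: le_less_trans)

lemma nn_integral_g_liminf_finite: "(\<integral>\<^sup>+x. g_liminf x \<partial>M) < \<infinity>"
  using nn_integral_mono[of M g_liminf g_limsup] g_liminf_le_limsup nn_integral_g_limsup_finite
  by (simp add: le_less_trans)

lemma AE_g_limsup_finite: "AE x in M. g_limsup x < \<infinity>"
  using nn_integral_PInf_AE[of g_limsup M] nn_integral_g_limsup_finite by (auto simp: top.not_eq_extremum)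

lemma AE_g_liminf_finite: "AE x in M. g_liminf x < \<infinity>"
  using nn_integral_PInf_AE[of g_liminf M] nn_integral_g_liminf_finite by (auto simp: top.not_eq_extremum)

lemma AE_g_liminf_invariant: "AE x in M. \<forall>k. g_liminf ((T ^^ k) x) = g_liminf x"
proof -
  have "AE x in M. g_liminf x \<le> g_liminf (T x)"
    using g_subadditive
  proof eventually_elim
    case (elim x)
    show ?case
      unfolding g_liminf_def
    proof (rule liminf_average_shift_le)
      show "g (Suc n) x \<le> g 1 x + g n (T x)" for n
        using elim[rule_format, of 1 n] by simp
    qed (rule g_nonneg)
  qed
  then show ?thesis
    by (intro AE_invariant_along_orbit AE_invariant_of_subinvariant g_liminf_measurable)
qed

definition liminf_bad_set :: "real \<Rightarrow> nat \<Rightarrow> 'a set" where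
  "liminf_bad_set e j = {x \<in> space M. \<not> (g_liminf x \<le> of_nat j
      \<and> (\<exists>N\<in>{1..j}. g N x \<le> N * (enn2real (g_liminf x) + e)))}"

lemma liminf_bad_set_sets [measurable]: "liminf_bad_set e j \<in> sets M"
  unfolding liminf_bad_set_def by measurable

lemma integral_liminf_bad_set_tendsto_0:
  assumes e: "0 < e"
  shows "(\<lambda>j. \<integral>x. indicator (liminf_bad_set e j) x * g 1 x \<partial>M) \<longlonglongrightarrow> 0"
proof -
  have "(\<lambda>j. \<integral>x. indicator (liminf_bad_set e j) x * g 1 x \<partial>M) \<longlonglongrightarrow> (\<integral>x. 0 \<partial>M)"
  proof (rule integral_dominated_convergence[where w = "g 1"])
    show "AE x in M. norm (indicator (liminf_bad_set e j) x * g 1 x) \<le> g 1 x" for j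
      by (intro AE_I2) (auto simp: indicator_def g_nonneg)
    show "AE x in M. (\<lambda>j. indicator (liminf_bad_set e j) x * g 1 x) \<longlonglongrightarrow> 0"
      using AE_g_liminf_finite
    proof eventually_elim
      case (elim x)
      have "\<not> (\<forall>N\<ge>1. enn2real (g_liminf x) + e \<le> g N x / N)"
      proof
        assume "\<forall>N\<ge>1. enn2real (g_liminf x) + e \<le> g N x / N"
        then have "ennreal (enn2real (g_liminf x) + e) \<le> g_liminf x"
          unfolding g_liminf_def
          by (intro Liminf_bounded eventually_sequentiallyI[of 1] ennreal_leI) auto
        moreover have "g_liminf x < ennreal (enn2real (g_liminf x) + e)"
          using elim e by (cases "g_liminf x") (auto simp: ennreal_lessI)
        ultimately show False
          by simp
      qed
      then obtain N where N: "1 \<le> N" "g N x \<le> N * (enn2real (g_liminf x) + e)"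
        by (auto simp: not_le field_simps)
      obtain J :: nat where "enn2real (g_liminf x) \<le> J"
        using real_arch_simple by blast
      then have J: "g_liminf x \<le> of_nat J"
        using elim by (cases "g_liminf x") (auto simp: ennreal_of_nat_eq_real_of_nat)
      have "\<forall>\<^sub>F j in sequentially. x \<notin> liminf_bad_set e j"
      proof (rule eventually_sequentiallyI)
        fix j assume "max N J \<le> j"
        then have "g_liminf x \<le> of_nat j" "N \<in> {1..j}"
          using J N(1) order_trans[OF J] by auto
        then show "x \<notin> liminf_bad_set e j"
          using N(2) by (auto simp: liminf_bad_set_def)
      qed
      then show "(\<lambda>j. indicator (liminf_bad_set e j) x * g 1 x) \<longlonglongrightarrow> 0"
        by (intro tendsto_eventually) (auto elim!: eventually_mono)
    qed
  qed (simp_all add: integrable_g1[simplified])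
  then show ?thesis
    by simp
qed

lemma integral_g_div_le_liminf:
  assumes e: "0 < e" and n: "1 \<le> n"
  shows "(\<integral>x. g n x \<partial>M) / n \<le> enn2real (\<integral>\<^sup>+x. g_liminf x \<partial>M) + e
    + (\<integral>x. indicator (liminf_bad_set e j) x * g 1 x \<partial>M) + j * (\<integral>x. g 1 x \<partial>M) / n"
proof -
  define F where "F x = (if g_liminf x \<le> of_nat j then enn2real (g_liminf x) else 0)" for x
  have F_measurable [measurable]: "F \<in> borel_measurable M"
    unfolding F_def by measurable
  have F_nonneg: "0 \<le> F x" for x
    by (simp add: F_def)
  have int_F: "integrable M F"
  proof (rule integrable_const_bound[of _ j])
    show "AE x in M. norm (F x) \<le> j"
      by (intro AE_I2) (auto simp: F_def enn2real_leI ennreal_of_nat_eq_real_of_nat)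
  qed simp
  have F_le: "ennreal (F x) \<le> g_liminf x" for x
    by (auto simp: F_def ennreal_enn2real_if)
  have F_integral_le: "(\<integral>x. F x \<partial>M) \<le> enn2real (\<integral>\<^sup>+x. g_liminf x \<partial>M)"
  proof -
    have "ennreal (\<integral>x. F x \<partial>M) = (\<integral>\<^sup>+x. ennreal (F x) \<partial>M)"
      using int_F F_nonneg by (intro nn_integral_eq_integral[symmetric]) auto
    also have "\<dots> \<le> (\<integral>\<^sup>+x. g_liminf x \<partial>M)"
      by (intro nn_integral_mono F_le)
    finally have "enn2real (ennreal (\<integral>x. F x \<partial>M)) \<le> enn2real (\<integral>\<^sup>+x. g_liminf x \<partial>M)"
      using nn_integral_g_liminf_finite by (intro enn2real_mono) auto
    then show ?thesis
      using F_nonneg by (simp add: integral_nonneg)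
  qed
  have cover: "(\<integral>x. g n x \<partial>M) \<le> n * (\<integral>x. F x + e \<partial>M) + n * (\<integral>x. indicator (liminf_bad_set e j) x * g 1 x \<partial>M)
      + j * (\<integral>x. g 1 x \<partial>M)"
  proof (rule integral_le_by_covering[where u = g and G = "\<lambda>x. F x + e" and b = "g 1"])
    show "integrable M (\<lambda>x. F x + e)"
      using int_F by simp
    show "AE x in M. \<forall>p q. 1 \<le> p \<longrightarrow> 1 \<le> q \<longrightarrow> g (p + q) x \<le> g p x + g q ((T ^^ p) x)"
      using g_subadditive by auto
    show "AE x in M. g 1 x \<le> F x + e + g 1 x"
      using F_nonneg e by (intro AE_I2) (simp add: add_nonneg_nonneg)
    show "AE x in M. x \<notin> liminf_bad_set e j \<longrightarrow> (\<exists>N. 1 \<le> N \<and> N \<le> j \<and> g N x \<le> (\<Sum>i<N. F ((T ^^ i) x) + e))"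
      using AE_g_liminf_invariant AE_space
    proof eventually_elim
      case (elim x)
      show ?case
      proof
        assume "x \<notin> liminf_bad_set e j"
        then obtain N where "N \<in> {1..j}" "g N x \<le> N * (enn2real (g_liminf x) + e)" "g_liminf x \<le> of_nat j"
          using elim(2) by (auto simp: liminf_bad_set_def)
        moreover have "(\<Sum>i<N. F ((T ^^ i) x) + e) = N * (enn2real (g_liminf x) + e)"
          using elim(1) \<open>g_liminf x \<le> of_nat j\<close> by (simp add: F_def)
        ultimately show "\<exists>N. 1 \<le> N \<and> N \<le> j \<and> g N x \<le> (\<Sum>i<N. F ((T ^^ i) x) + e)"
          by auto
      qed
    qed
  qed (use n integrable_g[OF n] integrable_g1 g_nonneg in auto)
  let ?E = "enn2real (\<integral>\<^sup>+x. g_liminf x \<partial>M)"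
  let ?I = "\<integral>x. indicator (liminf_bad_set e j) x * g 1 x \<partial>M"
  have "(\<integral>x. g n x \<partial>M) \<le> n * ((\<integral>x. F x \<partial>M) + e) + n * ?I + j * (\<integral>x. g 1 x \<partial>M)"
    using cover int_F by (simp add: prob_space)
  also have "\<dots> \<le> n * (?E + e) + n * ?I + j * (\<integral>x. g 1 x \<partial>M)"
    using F_integral_le by (intro add_right_mono mult_left_mono) auto
  finally have "(\<integral>x. g n x \<partial>M) / n \<le> (n * (?E + e) + n * ?I + j * (\<integral>x. g 1 x \<partial>M)) / n"
    by (rule divide_right_mono) simp
  also have "\<dots> = ?E + e + ?I + j * (\<integral>x. g 1 x \<partial>M) / n"
    using n by (simp add: field_simps)
  finally show ?thesis .
qed

lemma nn_integral_g_limsup_le_liminf: "(\<integral>\<^sup>+x. g_limsup x \<partial>M) \<le> (\<integral>\<^sup>+x. g_liminf x \<partial>M)"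
proof (rule ennreal_le_epsilon)
  fix d :: real assume d: "0 < d"
  define e where "e = d / 3"
  have e: "0 < e"
    using d by (simp add: e_def)
  obtain j where j: "(\<integral>x. indicator (liminf_bad_set e j) x * g 1 x \<partial>M) < e"
    using order_tendstoD(2)[OF integral_liminf_bad_set_tendsto_0[OF e] e]
    by (auto simp: eventually_sequentially)
  have "\<forall>\<^sub>F n in sequentially. j * (\<integral>x. g 1 x \<partial>M) / real n < e \<and> 1 \<le> n"
    using order_tendstoD(2)[OF lim_const_over_n e] eventually_ge_at_top[of "1::nat"] by eventually_elim auto
  then obtain n :: nat where n: "j * (\<integral>x. g 1 x \<partial>M) / n < e" "1 \<le> n"
    by (auto simp: eventually_sequentially)
  have "(\<integral>x. g n x \<partial>M) / n \<le> enn2real (\<integral>\<^sup>+x. g_liminf x \<partial>M) + d"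
    using integral_g_div_le_liminf[OF e n(2), of j] j n(1) e_def by linarith
  then have "ennreal ((\<integral>x. g n x \<partial>M) / n) \<le> ennreal (enn2real (\<integral>\<^sup>+x. g_liminf x \<partial>M) + d)"
    by (rule ennreal_leI)
  also have "\<dots> = (\<integral>\<^sup>+x. g_liminf x \<partial>M) + ennreal d"
    using nn_integral_g_liminf_finite d by (simp add: ennreal_plus ennreal_enn2real)
  finally show "(\<integral>\<^sup>+x. g_limsup x \<partial>M) \<le> (\<integral>\<^sup>+x. g_liminf x \<partial>M) + ennreal d"
    using nn_integral_g_limsup_le[OF n(2)] by (rule order_trans[rotated])
qed

theorem kingman_AE_convergent: "AE x in M. convergent (\<lambda>n. g n x / n)"
proof -
  have "AE x in M. g_limsup x = g_liminf x"
    using g_liminf_le_limsup nn_integral_g_limsup_le_liminf nn_integral_g_limsup_finite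
    by (intro AE_eq_of_nn_integral_le AE_I2) auto
  with AE_g_limsup_finite show ?thesis
  proof eventually_elim
    case (elim x)
    then have "(\<lambda>n. ennreal (g n x / n)) \<longlonglongrightarrow> g_limsup x"
      unfolding g_limsup_def g_liminf_def by (intro Liminf_eq_Limsup) auto
    then have "(\<lambda>n. enn2real (ennreal (g n x / n))) \<longlonglongrightarrow> enn2real (g_limsup x)"
      using elim by (intro tendsto_enn2real) auto
    then show ?case
      by (auto simp: g_nonneg convergent_def)
  qed
qed

end

section \<open>Cocycles and weak equivalence\<close>

lemma isomorphism_inverse:
  assumes "isomorphism M1 M2 h"
  shows isomorphism_in_space: "x \<in> space M1 \<Longrightarrow> h x \<in> space M2"
    and isomorphism_inv_in_space: "y \<in> space M2 \<Longrightarrow> the_inv_into (space M1) h y \<in> space M1"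
    and isomorphism_f_inv: "y \<in> space M2 \<Longrightarrow> h (the_inv_into (space M1) h y) = y"
    and isomorphism_inv_f: "x \<in> space M1 \<Longrightarrow> the_inv_into (space M1) h (h x) = x"
    and isomorphism_inv_measurable: "the_inv_into (space M1) h \<in> measurable M2 M1"
    and isomorphism_distr_inv: "distr M2 M1 (the_inv_into (space M1) h) = M1"
  using assms unfolding isomorphism_def measure_preserving_def
  by (auto simp: bij_betw_def the_inv_into_into f_the_inv_into_f the_inv_into_f_f)

lemma isomorphism_AE_inv:
  assumes "isomorphism M1 M2 h" and "AE x in M1. P x"
  shows "AE y in M2. P (the_inv_into (space M1) h y)"
proof (rule AE_distrD[OF isomorphism_inv_measurable[OF assms(1)]])
  show "AE x in distr M2 M1 (the_inv_into (space M1) h). P x"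
    unfolding isomorphism_distr_inv[OF assms(1)] by (rule assms(2))
qed

lemma isomorphism_integral_inv:
  fixes f :: "'a \<Rightarrow> real"
  assumes "isomorphism M1 M2 h" and "f \<in> borel_measurable M1"
  shows "(\<integral>y. f (the_inv_into (space M1) h y) \<partial>M2) = (\<integral>x. f x \<partial>M1)"
  using integral_distr[OF isomorphism_inv_measurable[OF assms(1)] assms(2)] assms(1)
  by (simp add: isomorphism_distr_inv)

lemma Aut_funpow_in_space: "T \<in> Aut M \<Longrightarrow> x \<in> space M \<Longrightarrow> (T ^^ n) x \<in> space M"
  by (induction n) (auto simp: Aut_def bij_betw_def)

lemma Aut_funpow_outside: "T \<in> Aut M \<Longrightarrow> x \<notin> space M \<Longrightarrow> (T ^^ n) x = x"
  by (induction n) (auto simp: Aut_def)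

lemma mpt_of_Aut: "prob_space M \<Longrightarrow> T \<in> Aut M \<Longrightarrow> mpt M T"
  and mpt_aut_inv: "prob_space M \<Longrightarrow> T \<in> Aut M \<Longrightarrow> mpt M (aut_inv M T)"
  by (simp_all add: Aut_def mpt_def mpt_axioms_def)

lemma Aut_apply_aut_inv: "T \<in> Aut M \<Longrightarrow> z \<in> space M \<Longrightarrow> T (aut_inv M T z) = z"
  by (auto simp: Aut_def aut_inv_def intro: f_the_inv_into_f_bij_betw)

lemma aut_subgroup_funpow: "aut_subgroup M \<Gamma> \<Longrightarrow> \<gamma> \<in> \<Gamma> \<Longrightarrow> \<gamma> ^^ n \<in> \<Gamma>"
  by (induction n) (auto simp: aut_subgroup_def id_def[symmetric])

lemma subadditive_fun_measurable [measurable]: "subadditive_fun \<theta> \<Longrightarrow> \<theta> \<in> borel_measurable borel"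
  by (auto simp: subadditive_fun_def intro: borel_measurable_continuous_onI)

lemma subadditive_fun_coboundary_le:
  assumes "subadditive_fun \<theta>"
  shows "\<theta> v \<le> \<theta> (u + v - w) + \<theta> (- u) + \<theta> w"
    and "\<theta> (u + v - w) \<le> \<theta> v + \<theta> u + \<theta> (- w)"
proof -
  have sub: "\<theta> (a + b) \<le> \<theta> a + \<theta> b" for a b
    using assms by (simp add: subadditive_fun_def)
  have "- u + (u + v - w) + w = v"
    by (simp only: add_diff_eq[symmetric] minus_add_cancel diff_add_cancel)
  then show "\<theta> v \<le> \<theta> (u + v - w) + \<theta> (- u) + \<theta> w"
    using sub[of "- u" "u + v - w"] sub[of "- u + (u + v - w)" w] by simp
  show "\<theta> (u + v - w) \<le> \<theta> v + \<theta> u + \<theta> (- w)"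
    using sub[of u "v - w"] sub[of v "- w"] by (simp add: add_diff_eq)
qed

context
  fixes M :: "'a measure" and \<Gamma> and \<alpha> :: "'a \<Rightarrow> ('a \<Rightarrow> 'a) \<Rightarrow> 'g::{group_add,topological_space}"
    and \<theta> :: "'g \<Rightarrow> real" and \<gamma>
  assumes \<Gamma>: "aut_subgroup M \<Gamma>" and \<theta>: "subadditive_fun \<theta>" and \<alpha>: "cocycle M \<Gamma> \<alpha>"
    and \<gamma>: "\<gamma> \<in> \<Gamma>"
begin

lemma cocycle_funpow_measurable [measurable]: "(\<lambda>x. \<theta> (\<alpha> x (\<gamma> ^^ n))) \<in> borel_measurable M"
proof -
  have "(\<lambda>x. \<alpha> x (\<gamma> ^^ n)) \<in> borel_measurable M"
    using \<alpha> aut_subgroup_funpow[OF \<Gamma> \<gamma>] by (auto simp: cocycle_def)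
  then show ?thesis
    using subadditive_fun_measurable[OF \<theta>] by measurable
qed

lemma Theta_pt_measurable [measurable]: "Theta_pt \<theta> \<alpha> \<gamma> \<in> borel_measurable M"
  unfolding Theta_pt_def by measurable

lemma subadditive_process_cocycle:
  assumes "prob_space M" and "integrable M (\<lambda>x. \<theta> (\<alpha> x \<gamma>))"
  shows "subadditive_process M \<gamma> (\<lambda>n x. \<theta> (\<alpha> x (\<gamma> ^^ n)))"
proof -
  have \<gamma>_Aut: "\<gamma> \<in> Aut M"
    using \<Gamma> \<gamma> by (auto simp: aut_subgroup_def)
  have "AE x in M. \<theta> (\<alpha> x (\<gamma> ^^ (p + q))) \<le> \<theta> (\<alpha> x (\<gamma> ^^ p)) + \<theta> (\<alpha> ((\<gamma> ^^ p) x) (\<gamma> ^^ q))" for p q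
  proof -
    have "AE x in M. \<alpha> x ((\<gamma> ^^ q) \<circ> (\<gamma> ^^ p)) = \<alpha> x (\<gamma> ^^ p) + \<alpha> ((\<gamma> ^^ p) x) (\<gamma> ^^ q)"
      using \<alpha> aut_subgroup_funpow[OF \<Gamma> \<gamma>] by (auto simp: cocycle_def)
    then show ?thesis
      by eventually_elim (use \<theta> in \<open>simp add: subadditive_fun_def funpow_add[symmetric] add.commute\<close>)
  qed
  then have "AE x in M. \<forall>p q. \<theta> (\<alpha> x (\<gamma> ^^ (p + q))) \<le> \<theta> (\<alpha> x (\<gamma> ^^ p)) + \<theta> (\<alpha> ((\<gamma> ^^ p) x) (\<gamma> ^^ q))"
    by (simp add: AE_all_countable)
  then show ?thesis
  proof (intro subadditive_process.intro subadditive_process_axioms.intro mpt_of_Aut[OF assms(1) \<gamma>_Aut])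
    show "0 \<le> \<theta> (\<alpha> x (\<gamma> ^^ n))" for n x
      using \<theta> by (simp add: subadditive_fun_def)
    show "integrable M (\<lambda>x. \<theta> (\<alpha> x (\<gamma> ^^ 1)))"
      using assms(2) by simp
  qed simp
qed

lemma AE_convergent_cocycle:
  assumes "prob_space M" and "integrable M (\<lambda>x. \<theta> (\<alpha> x \<gamma>))"
  shows "AE x in M. convergent (\<lambda>n. \<theta> (\<alpha> x (\<gamma> ^^ n)) / n)"
  using subadditive_process.kingman_AE_convergent[OF subadditive_process_cocycle[OF assms]] .

end

lemma conj_by_funpow:
  assumes iso: "isomorphism M1 M2 h" and \<gamma>: "\<gamma> \<in> Aut M1"
  shows "conj_by M1 M2 h \<gamma> ^^ n = conj_by M1 M2 h (\<gamma> ^^ n)"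
proof (induction n)
  case 0
  show ?case
    by (rule ext) (auto simp: conj_by_def isomorphism_f_inv[OF iso])
next
  case (Suc n)
  show ?case
  proof (rule ext)
    fix y
    show "(conj_by M1 M2 h \<gamma> ^^ Suc n) y = conj_by M1 M2 h (\<gamma> ^^ Suc n) y"
    proof (cases "y \<in> space M2")
      case True
      define x where "x = the_inv_into (space M1) h y"
      have "(\<gamma> ^^ n) x \<in> space M1"
        using Aut_funpow_in_space[OF \<gamma>] isomorphism_inv_in_space[OF iso True] by (simp add: x_def)
      then show ?thesis
        using Suc True iso
        by (simp add: conj_by_def x_def[symmetric] isomorphism_in_space isomorphism_inv_f)
    next
      case False
      then show ?thesis
        using Suc by (simp add: conj_by_def)
    qed
  qed
qed

lemma transport_cocycle_conj_by_funpow: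
  assumes iso: "isomorphism M1 M2 h" and \<gamma>: "\<gamma> \<in> Aut M1" and y: "y \<in> space M2"
  shows "transport_cocycle M1 M2 h \<alpha> y (conj_by M1 M2 h \<gamma> ^^ n) = \<alpha> (the_inv_into (space M1) h y) (\<gamma> ^^ n)"
proof -
  have "(\<lambda>x. if x \<in> space M1 then the_inv_into (space M1) h (conj_by M1 M2 h (\<gamma> ^^ n) (h x)) else x) = \<gamma> ^^ n"
  proof (rule ext)
    fix x
    show "(if x \<in> space M1 then the_inv_into (space M1) h (conj_by M1 M2 h (\<gamma> ^^ n) (h x)) else x) = (\<gamma> ^^ n) x"
      using Aut_funpow_in_space[OF \<gamma>, of x n] Aut_funpow_outside[OF \<gamma>, of x n] iso
      by (simp add: conj_by_def isomorphism_in_space isomorphism_inv_f)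
  qed
  then show ?thesis
    by (simp add: transport_cocycle_def conj_by_funpow[OF iso \<gamma>])
qed

lemma AE_cohomologous_transport_funpow:
  assumes iso: "isomorphism M1 M2 h" and \<gamma>: "\<gamma> \<in> Aut M1"
    and T: "\<And>n. conj_by M1 M2 h \<gamma> ^^ n \<in> \<Gamma>2"
    and \<phi>: "\<forall>\<gamma>\<in>\<Gamma>2. AE y in M2. \<beta> y \<gamma> = \<phi> y + transport_cocycle M1 M2 h \<alpha> y \<gamma> - \<phi> (\<gamma> y)"
  shows "AE y in M2. \<forall>n. \<beta> y (conj_by M1 M2 h \<gamma> ^^ n)
    = \<phi> y + \<alpha> (the_inv_into (space M1) h y) (\<gamma> ^^ n) - \<phi> ((conj_by M1 M2 h \<gamma> ^^ n) y)"
  unfolding AE_all_countable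
proof
  fix n
  show "AE y in M2. \<beta> y (conj_by M1 M2 h \<gamma> ^^ n)
      = \<phi> y + \<alpha> (the_inv_into (space M1) h y) (\<gamma> ^^ n) - \<phi> ((conj_by M1 M2 h \<gamma> ^^ n) y)"
    using \<phi>[rule_format, OF T[of n]] AE_space
    by eventually_elim (auto simp: transport_cocycle_conj_by_funpow[OF iso \<gamma>])
qed

lemma weakly_equivalent_through_coboundary:
  assumes \<Gamma>1: "aut_subgroup M1 \<Gamma>1" and \<Gamma>2: "aut_subgroup M2 \<Gamma>2"
    and weq: "weakly_equivalent_through M1 \<Gamma>1 \<alpha>1 M2 \<Gamma>2 \<alpha>2 h" and \<gamma>1: "\<gamma>1 \<in> \<Gamma>1"
  obtains \<phi> where "\<phi> \<in> borel_measurable M2"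
    and "AE y in M2. \<forall>n. \<alpha>2 y (conj_by M1 M2 h \<gamma>1 ^^ n)
      = \<phi> y + \<alpha>1 (the_inv_into (space M1) h y) (\<gamma>1 ^^ n) - \<phi> ((conj_by M1 M2 h \<gamma>1 ^^ n) y)"
proof -
  have iso: "isomorphism M1 M2 h" and "cohomologous M2 \<Gamma>2 (transport_cocycle M1 M2 h \<alpha>1) \<alpha>2"
    and T: "conj_by M1 M2 h \<gamma>1 \<in> \<Gamma>2"
    using weq \<gamma>1 by (auto simp: weakly_equivalent_through_def)
  then obtain \<phi> where "\<phi> \<in> borel_measurable M2"
    and "\<forall>\<gamma>\<in>\<Gamma>2. AE y in M2. \<alpha>2 y \<gamma> = \<phi> y + transport_cocycle M1 M2 h \<alpha>1 y \<gamma> - \<phi> (\<gamma> y)"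
    by (auto simp: cohomologous_def)
  moreover have "\<gamma>1 \<in> Aut M1"
    using \<Gamma>1 \<gamma>1 by (auto simp: aut_subgroup_def)
  ultimately show ?thesis
    using iso aut_subgroup_funpow[OF \<Gamma>2 T] by (intro that AE_cohomologous_transport_funpow)
qed

lemma AE_Theta_pt_weakly_equivalent:
  assumes P1: "prob_space M1" and P2: "prob_space M2"
    and \<Gamma>1: "aut_subgroup M1 \<Gamma>1" and \<Gamma>2: "aut_subgroup M2 \<Gamma>2" and \<theta>: "subadditive_fun \<theta>"
    and \<alpha>1: "cocycle M1 \<Gamma>1 \<alpha>1" and \<alpha>2: "cocycle M2 \<Gamma>2 \<alpha>2"
    and weq: "weakly_equivalent_through M1 \<Gamma>1 \<alpha>1 M2 \<Gamma>2 \<alpha>2 h" and \<gamma>1: "\<gamma>1 \<in> \<Gamma>1"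
    and int1: "integrable M1 (\<lambda>x. \<theta> (\<alpha>1 x \<gamma>1))"
    and int2: "integrable M2 (\<lambda>x. \<theta> (\<alpha>2 x (conj_by M1 M2 h \<gamma>1)))"
  shows "AE y in M2. Theta_pt \<theta> \<alpha>2 (conj_by M1 M2 h \<gamma>1) y = Theta_pt \<theta> \<alpha>1 \<gamma>1 (the_inv_into (space M1) h y)"
proof -
  define T where "T = conj_by M1 M2 h \<gamma>1"
  define hinv where "hinv = the_inv_into (space M1) h"
  have iso: "isomorphism M1 M2 h" and T: "T \<in> \<Gamma>2"
    using weq \<gamma>1 by (auto simp: weakly_equivalent_through_def T_def)
  obtain \<phi> where [measurable]: "\<phi> \<in> borel_measurable M2"
    and coboundary: "AE y in M2. \<forall>n. \<alpha>2 y (T ^^ n) = \<phi> y + \<alpha>1 (hinv y) (\<gamma>1 ^^ n) - \<phi> ((T ^^ n) y)"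
    unfolding T_def hinv_def by (rule weakly_equivalent_through_coboundary[OF \<Gamma>1 \<Gamma>2 weq \<gamma>1])
  have T_Aut: "T \<in> Aut M2"
    using \<Gamma>2 T by (auto simp: aut_subgroup_def)
  interpret M2: mpt M2 T
    using P2 T_Aut by (rule mpt_of_Aut)
  define a where "a n y = \<theta> (\<alpha>2 y (T ^^ n))" for n y
  define b where "b n y = \<theta> (\<alpha>1 (hinv y) (\<gamma>1 ^^ n))" for n y
  have [measurable]: "hinv \<in> measurable M2 M1"
    unfolding hinv_def by (rule isomorphism_inv_measurable[OF iso])
  have [measurable]: "(\<lambda>x. \<theta> (\<alpha>1 x (\<gamma>1 ^^ n))) \<in> borel_measurable M1"
    "(\<lambda>y. \<theta> (\<alpha>2 y (T ^^ n))) \<in> borel_measurable M2" for n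
    by (rule cocycle_funpow_measurable[OF \<Gamma>1 \<theta> \<alpha>1 \<gamma>1] cocycle_funpow_measurable[OF \<Gamma>2 \<theta> \<alpha>2 T])+
  have \<theta>\<phi> [measurable]: "(\<lambda>y. \<theta> (\<phi> y)) \<in> borel_measurable M2"
    using subadditive_fun_measurable[OF \<theta>] by measurable
  have [measurable]: "a n \<in> borel_measurable M2" "b n \<in> borel_measurable M2" for n
    unfolding a_def b_def by simp_all
  have conv_a: "AE y in M2. convergent (\<lambda>n. a n y / n)"
    using AE_convergent_cocycle[OF \<Gamma>2 \<theta> \<alpha>2 T P2] int2 by (simp add: a_def T_def)
  have conv_b: "AE y in M2. convergent (\<lambda>n. b n y / n)"
    unfolding b_def hinv_def by (rule isomorphism_AE_inv[OF iso AE_convergent_cocycle[of M1 \<Gamma>1 \<theta> \<alpha>1 \<gamma>1, OF \<Gamma>1 \<theta> \<alpha>1 \<gamma>1 P1 int1]])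
  \<comment> \<open>Negation on the group need not be continuous, so only \<theta> \<circ> \<phi> is known to be measurable.\<close>
  have bound_b: "AE y in M2. \<forall>n. b n y \<le> a n y + \<theta> (- \<phi> y) + \<theta> (\<phi> ((T ^^ n) y))"
    and bound_a: "AE y in M2. \<forall>n. a n y \<le> b n y + \<theta> (\<phi> y) + \<theta> (- \<phi> ((T ^^ n) y))"
    using coboundary by (eventually_elim,
        simp add: a_def b_def subadditive_fun_coboundary_le[OF \<theta>])+
  have "AE y in M2. lim (\<lambda>n. b n y / n) \<le> lim (\<lambda>n. a n y / n)"
    by (rule M2.AE_lim_le_of_bound_measurable_at_orbit[OF \<theta>\<phi> bound_b conv_a conv_b])
  moreover have "AE y in M2. lim (\<lambda>n. a n y / n) \<le> lim (\<lambda>n. b n y / n)"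
    by (rule M2.AE_lim_le_of_bound_measurable_at_start[OF mpt_aut_inv[OF P2 T_Aut] Aut_apply_aut_inv[OF T_Aut]
          _ _ \<theta>\<phi> bound_a conv_a conv_b]) simp_all
  ultimately have "AE y in M2. lim (\<lambda>n. a n y / n) = lim (\<lambda>n. b n y / n)"
    by eventually_elim simp
  then show ?thesis
    by (simp add: Theta_pt_def T_def hinv_def a_def b_def)
qed

theorem theorem2:
  fixes M1 :: "'a measure" and M2 :: "'b measure"
    and \<Gamma>1 :: "('a \<Rightarrow> 'a) set" and \<Gamma>2 :: "('b \<Rightarrow> 'b) set"
    and \<alpha>1 :: "'a \<Rightarrow> ('a \<Rightarrow> 'a) \<Rightarrow> 'g::{group_add,topological_space}"
    and \<alpha>2 :: "'b \<Rightarrow> ('b \<Rightarrow> 'b) \<Rightarrow> 'g"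
    and \<theta> :: "'g \<Rightarrow> real" and h :: "'a \<Rightarrow> 'b"
    and \<gamma>1 :: "'a \<Rightarrow> 'a"
  assumes "prob_space M1" and "prob_space M2"
    and "aut_subgroup M1 \<Gamma>1" and "aut_subgroup M2 \<Gamma>2"
    and "subadditive_fun \<theta>"
    and "cocycle M1 \<Gamma>1 \<alpha>1" and "cocycle M2 \<Gamma>2 \<alpha>2"
    and "weakly_equivalent_through M1 \<Gamma>1 \<alpha>1 M2 \<Gamma>2 \<alpha>2 h"
    and "\<gamma>1 \<in> \<Gamma>1"
    and "integrable M1 (\<lambda>x. \<theta> (\<alpha>1 x \<gamma>1))"
    and "integrable M2 (\<lambda>x. \<theta> (\<alpha>2 x (conj_by M1 M2 h \<gamma>1)))"
  shows "Theta_mu M1 \<theta> \<alpha>1 \<gamma>1 = Theta_mu M2 \<theta> \<alpha>2 (conj_by M1 M2 h \<gamma>1)"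
proof -
  have iso: "isomorphism M1 M2 h" and T: "conj_by M1 M2 h \<gamma>1 \<in> \<Gamma>2"
    using assms(8,9) by (auto simp: weakly_equivalent_through_def)
  have hinv: "the_inv_into (space M1) h \<in> measurable M2 M1"
    by (rule isomorphism_inv_measurable[OF iso])
  have Theta1: "Theta_pt \<theta> \<alpha>1 \<gamma>1 \<in> borel_measurable M1"
    by (rule Theta_pt_measurable[OF assms(3,5,6,9)])
  have "Theta_mu M2 \<theta> \<alpha>2 (conj_by M1 M2 h \<gamma>1) = (\<integral>y. Theta_pt \<theta> \<alpha>1 \<gamma>1 (the_inv_into (space M1) h y) \<partial>M2)"
    unfolding Theta_mu_def
    using Theta_pt_measurable[OF assms(4,5,7) T] measurable_compose[OF hinv Theta1]
      AE_Theta_pt_weakly_equivalent[of M1 M2 \<Gamma>1 \<Gamma>2 \<theta> \<alpha>1 \<alpha>2 h \<gamma>1, OF assms]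
    by (rule integral_cong_AE)
  also have "\<dots> = Theta_mu M1 \<theta> \<alpha>1 \<gamma>1"
    unfolding Theta_mu_def by (rule isomorphism_integral_inv[OF iso Theta1])
  finally show ?thesis
    by (rule sym)
qed

end
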